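(* Let $n\ge 2$, $0<q<n$ and $k\in\{1,\dots,n-1\}$. Then there exist a sequence of origin-symmetric convex bodies $K_l\subset\mathbb{R}^n$, $l\in\mathbb N$, and a $k$-dimensional linear subspace $L\subset\mathbb{R}^n$ such that $$\lim_{l\to\infty}\frac{\widetilde C_q(K_l,S^{n-1}\cap L)}{\widetilde C_q(K_l,S^{n-1})}=\begin{cases}k/q, & k\le q,\\ 1, & k\ge q.\end{cases}$$ (For instance, one may take $L=\mathrm{lin}\{e_1,\dots,e_k\}$ and $K_l=(r_l B_k)\times B_{n-k}$ with $r_l\to 0^+$, where $B_m$ is the Euclidean unit ball of $\mathbb R^m$.)
   Context: A convex body is a compact convex subset of $\mathbb{R}^n$ with non-empty interior; origin-symmetric means $K=-K$. For a convex body $K$ with the origin in its interior: $h_K(x)=\max_{y\in K}\langle x,y\rangle$, $\rho_K(x)=\max\{\rho>0:\rho x\in K\}$, $H_K(v)=\{x:\langle x,v\rangle=h_K(v)\}$, and for $\eta\subseteq S^{n-1}$, $\alpha_K^*(\eta)=\{u\in S^{n-1}:\rho_K(u)u\in H_K(v)\text{ for some }v\in\eta\}$. The $q$-th dual curvature measure of a Borel set $\eta\subseteq S^{n-1}$ is $\widetilde C_q(K,\eta)=\frac1n\int_{\alpha_K^*(\eta)}\rho_K(u)^q\,d\mathcal H^{n-1}(u)$. *)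

theory Defs
  imports "HOL-Analysis.Analysis"
begin

definition convex_body :: "'a::euclidean_space set \<Rightarrow> bool" where
  "convex_body K \<longleftrightarrow> compact K \<and> convex K \<and> interior K \<noteq> {}"

definition origin_symmetric :: "'a::euclidean_space set \<Rightarrow> bool" where
  "origin_symmetric K \<longleftrightarrow> uminus ` K = K"

definition support_fun :: "'a::euclidean_space set \<Rightarrow> 'a \<Rightarrow> real" where
  "support_fun K x = Sup ((\<lambda>y. x \<bullet> y) ` K)"

definition radial_fun :: "'a::euclidean_space set \<Rightarrow> 'a \<Rightarrow> real" where
  "radial_fun K x = Sup {r. r > 0 \<and> r *\<^sub>R x \<in> K}"

definition supp_hyperplane :: "'a::euclidean_space set \<Rightarrow> 'a \<Rightarrow> 'a set" where
  "supp_hyperplane K v = {x. x \<bullet> v = support_fun K v}"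

definition rev_radial_gauss :: "'a::euclidean_space set \<Rightarrow> 'a set \<Rightarrow> 'a set" where
  "rev_radial_gauss K \<eta> =
     {u \<in> sphere 0 1. \<exists>v\<in>\<eta>. radial_fun K u *\<^sub>R u \<in> supp_hyperplane K v}"

text \<open>Spherical Lebesgue measure (= (n-1)-dimensional Hausdorff measure on the unit
  sphere), defined by the cone construction: sigma(A) = n * vol({t u : u in A, 0 < t \<le> 1}).\<close>
definition sphere_measure :: "'a::euclidean_space measure" where
  "sphere_measure = measure_of (sphere 0 1) (sets (restrict_space borel (sphere (0::'a) 1)))
     (\<lambda>A. of_nat DIM('a) * emeasure lebesgue {t *\<^sub>R u | t u. 0 < t \<and> t \<le> 1 \<and> u \<in> A})"

definition dual_curv_measure :: "real \<Rightarrow> 'a::euclidean_space set \<Rightarrow> 'a set \<Rightarrow> real" where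
  "dual_curv_measure q K \<eta> =
     (1 / real DIM('a)) * (LINT u : rev_radial_gauss K \<eta> | sphere_measure. radial_fun K u powr q)"

end

theory Submission
  imports Defs
begin

(* Take L = span of k coordinate vectors and the cylinders K_r = {x. |P x| <= r, |Q x| <= 1},
   where P and Q are the orthogonal projections onto L and onto its orthogonal complement.
   By polar coordinates, the q-th dual curvature measure of eta is q/n times the integral of
   |x|^(q-n) over K intersected with a cone C whenever the reverse radial Gauss image of eta is
   the trace of C on the sphere.  For K_r this holds with C the whole space for the full sphere,
   and with the cone {r |Q x| <= |P x|} of directions leaving K_r through its flat face for the
   great subsphere of L.  For x uniform on K_1, (|P x|, |Q x|) has density proportional to
   t^(k-1) s^(n-k-1) on the unit square, so the substitution t = r tau turns both integrals
   into r^k times integrals over the unit square (resp. over {s <= tau}) of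
   tau^(k-1) s^(n-k-1) (r^2 tau^2 + s^2)^((q-n)/2), which increase as r -> 0 to the
   corresponding integrals of tau^(k-1) s^(q-k-1).  For k < q these are 1/(k(q-k)) and
   1/(q(q-k)), so the ratio tends to k/q.  For q <= k the integral over {s <= tau} diverges,
   while the one over {s > tau} stays bounded, so the ratio tends to 1. *)

section \<open>Polar coordinates\<close>

lemma measure_eqI_atMost:
  fixes M N :: "real measure"
  assumes sets: "sets M = sets borel" "sets N = sets borel"
    and fin: "\<And>a. emeasure M {..a} < \<infinity>"
    and eq: "\<And>a. emeasure M {..a} = emeasure N {..a}"
  shows "M = N"
proof (rule measure_eqI_generator_eq[where E="range atMost" and \<Omega>=UNIV and A="\<lambda>i. {..real i}"])
  have "sets (borel::real measure) = sigma_sets UNIV (range atMost)"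
    by (subst borel_eq_atMost) (simp add: sets_measure_of)
  then show "sets M = sigma_sets UNIV (range atMost)" "sets N = sigma_sets UNIV (range atMost)"
    using sets by simp_all
  show "Int_stable (range (atMost :: real \<Rightarrow> real set))"
    by (auto simp: Int_stable_def intro!: exI[of _ "min _ _"])
  show "(\<Union>i. {..real i}) = UNIV"
    by (auto simp: real_arch_simple)
  show "emeasure M {..real i} \<noteq> \<infinity>" for i
    using fin[of "real i"] by simp
qed (use eq in auto)

lemma emeasure_lborel_diagonal_preimage:
  fixes c :: "'a::euclidean_space \<Rightarrow> real"
  assumes c: "\<And>j. j \<in> Basis \<Longrightarrow> 0 < c j" and A: "A \<in> sets borel"
  shows "emeasure lborel A =
    ennreal (\<Prod>j\<in>Basis. c j) * emeasure lborel {x. (\<Sum>j\<in>Basis. (c j * (x \<bullet> j)) *\<^sub>R j) \<in> A}"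
proof -
  define T where "T x = (\<Sum>j\<in>Basis. (c j * (x \<bullet> j)) *\<^sub>R j)" for x :: 'a
  have T[measurable]: "T \<in> borel_measurable borel"
    unfolding T_def by measurable
  have "lborel = density (distr lborel borel (\<lambda>x. 0 + T x)) (\<lambda>_. \<Prod>j\<in>Basis. \<bar>c j\<bar>)"
    unfolding T_def using c by (intro lborel_affine_euclidean) (metis less_irrefl)
  also have "(\<Prod>j\<in>Basis. \<bar>c j\<bar>) = (\<Prod>j\<in>Basis. c j)"
    using c by (intro prod.cong) (auto intro: abs_of_pos)
  finally have "emeasure lborel A = emeasure (density (distr lborel borel T) (\<lambda>_. \<Prod>j\<in>Basis. c j)) A"
    by simp
  also have "\<dots> = ennreal (\<Prod>j\<in>Basis. c j) * emeasure lborel (T -` A)"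
    using A by (simp add: emeasure_density_const emeasure_distr)
  finally show ?thesis
    by (simp add: T_def vimage_def)
qed

lemma emeasure_lborel_scaleR_preimage:
  fixes A :: "'a::euclidean_space set"
  assumes "0 < c" and "A \<in> sets borel"
  shows "emeasure lborel A = ennreal (c ^ DIM('a)) * emeasure lborel {x. c *\<^sub>R x \<in> A}"
proof -
  have "(\<Sum>j\<in>Basis. (c * (x \<bullet> j)) *\<^sub>R j) = c *\<^sub>R x" for x :: 'a
    by (simp only: scaleR_scaleR[symmetric] scaleR_sum_right[symmetric] euclidean_representation)
  then show ?thesis
    using emeasure_lborel_diagonal_preimage[of "\<lambda>_. c" A] assms by simp
qed

definition solid_cone :: "'a::euclidean_space set \<Rightarrow> 'a set" where
  "solid_cone A = {x. x \<noteq> 0 \<and> norm x \<le> 1 \<and> sgn x \<in> A}"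

lemma solid_cone_eq:
  assumes "A \<subseteq> sphere 0 1"
  shows "{t *\<^sub>R u | t u. 0 < t \<and> t \<le> 1 \<and> u \<in> A} = solid_cone A"
proof (intro set_eqI iffI)
  fix x assume "x \<in> {t *\<^sub>R u | t u. 0 < t \<and> t \<le> 1 \<and> u \<in> A}"
  then obtain t u where "x = t *\<^sub>R u" "0 < t" "t \<le> 1" "u \<in> A"
    by blast
  with assms show "x \<in> solid_cone A"
    by (auto simp: solid_cone_def sgn_scaleR sgn_div_norm)
next
  fix x assume "x \<in> solid_cone A"
  then show "x \<in> {t *\<^sub>R u | t u. 0 < t \<and> t \<le> 1 \<and> u \<in> A}"
    by (intro CollectI exI[of _ "norm x"] exI[of _ "sgn x"]) (auto simp: solid_cone_def sgn_div_norm)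
qed

lemma solid_cone_borel:
  assumes "A \<in> sets (restrict_space borel (sphere (0::'a::euclidean_space) 1))"
  shows "solid_cone A \<in> sets borel"
proof -
  obtain A' where A': "A' \<in> sets borel" "A = sphere 0 1 \<inter> A'"
    using assms by (auto simp: sets_restrict_space)
  then have "solid_cone A = {x. x \<noteq> 0 \<and> norm x \<le> 1 \<and> x /\<^sub>R norm x \<in> A'}"
    by (auto simp: solid_cone_def sgn_div_norm norm_divide)
  also have "\<dots> \<in> sets borel"
    using A'(1) by measurable
  finally show ?thesis .
qed

lemma sigma_algebra_sphere:
  "sigma_algebra (sphere 0 1) (sets (restrict_space borel (sphere (0::'a::euclidean_space) 1)))"
  using sets.sigma_algebra_axioms[of "restrict_space borel (sphere (0::'a) 1)"]
  by (simp add: space_restrict_space)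

lemma emeasure_sphere_measure:
  assumes A: "A \<in> sets (restrict_space borel (sphere (0::'a::euclidean_space) 1))"
  shows "emeasure (sphere_measure :: 'a measure) A = of_nat DIM('a) * emeasure lborel (solid_cone A)"
proof -
  let ?M = "sets (restrict_space borel (sphere (0::'a) 1))"
  let ?\<mu> = "\<lambda>A::'a set. of_nat DIM('a) * emeasure lebesgue {t *\<^sub>R u | t u. 0 < t \<and> t \<le> 1 \<and> u \<in> A}"
  have \<mu>: "?\<mu> B = of_nat DIM('a) * emeasure lborel (solid_cone B)" if "B \<in> ?M" for B
  proof -
    have "B \<subseteq> sphere 0 1"
      using that by (auto simp: sets_restrict_space)
    then show ?thesis
      using solid_cone_borel[OF that] by (simp add: solid_cone_eq emeasure_completion)
  qed
  have "positive ?M ?\<mu>"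
    using solid_cone_eq[of "{}"] by (simp add: positive_def solid_cone_def)
  moreover have "countably_additive ?M ?\<mu>"
    unfolding countably_additive_def
  proof (intro allI impI)
    fix F :: "nat \<Rightarrow> 'a set"
    assume F: "range F \<subseteq> ?M" "disjoint_family F" "\<Union> (range F) \<in> ?M"
    have "solid_cone (F i) \<in> sets borel" for i
      using F(1) by (auto intro: solid_cone_borel)
    with F have "(\<Sum>i. emeasure lborel (solid_cone (F i))) = emeasure lborel (\<Union>i. solid_cone (F i))"
      by (intro suminf_emeasure) (auto simp: disjoint_family_on_def solid_cone_def)
    also have "(\<Union>i. solid_cone (F i)) = solid_cone (\<Union>(range F))"
      by (auto simp: solid_cone_def)
    moreover have "?\<mu> (F i) = of_nat DIM('a) * emeasure lborel (solid_cone (F i))" for i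
      using F(1) by (intro \<mu>) auto
    ultimately show "(\<Sum>i. ?\<mu> (F i)) = ?\<mu> (\<Union>(range F))"
      using \<mu>[OF F(3)] by (simp add: ennreal_suminf_cmult)
  qed
  ultimately show ?thesis
    unfolding sphere_measure_def
    by (subst emeasure_measure_of_sigma[OF sigma_algebra_sphere _ _ A]) (auto intro: \<mu>[OF A])
qed

lemma space_sphere_measure: "space (sphere_measure :: 'a::euclidean_space measure) = sphere 0 1"
  unfolding sphere_measure_def by (rule space_measure_of_conv)

lemma sets_sphere_measure:
  "sets (sphere_measure :: 'a::euclidean_space measure) = sets (restrict_space borel (sphere (0::'a) 1))"
  unfolding sphere_measure_def
  using sets.space_closed[of "restrict_space borel (sphere (0::'a) 1)"]
  by (subst sets_measure_of)
     (auto simp: space_restrict_space sigma_algebra.sigma_sets_eq[OF sigma_algebra_sphere])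

lemma finite_measure_sphere_measure: "finite_measure (sphere_measure :: 'a::euclidean_space measure)"
proof
  have sphere: "sphere (0::'a) 1 \<in> sets (restrict_space borel (sphere (0::'a) 1))"
    by (metis sets.top space_borel space_restrict_space inf_top.right_neutral)
  have "emeasure lborel (solid_cone (sphere (0::'a) 1)) \<le> emeasure lborel (cball (0::'a) 1)"
    by (intro emeasure_mono) (auto simp: solid_cone_def)
  also have "\<dots> < \<infinity>"
    by (rule emeasure_lborel_cball_finite)
  finally show "emeasure (sphere_measure :: 'a measure) (space sphere_measure) \<noteq> \<infinity>"
    by (simp add: space_sphere_measure emeasure_sphere_measure[OF sphere] ennreal_mult_eq_top_iff)
qed

lemma measurable_sphere_measure_id: "(\<lambda>x. x) \<in> (sphere_measure :: 'a::euclidean_space measure) \<rightarrow>\<^sub>M borel"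
  by (subst measurable_cong_sets[OF sets_sphere_measure refl])
     (simp add: measurable_restrict_space1)

text \<open>The direction of \<open>0\<close> is arbitrary; it only has to lie on the sphere.\<close>

definition sphere_proj :: "'a::euclidean_space \<Rightarrow> 'a" where
  "sphere_proj x = (if x = 0 then (SOME b. b \<in> Basis) else sgn x)"

lemma sphere_proj_in_sphere: "sphere_proj x \<in> sphere 0 1"
proof -
  have "(SOME b. b \<in> Basis) \<in> (Basis :: 'a set)"
    by (rule someI_ex) (use nonempty_Basis in blast)
  then show ?thesis
    by (simp add: sphere_proj_def norm_sgn)
qed

lemma sphere_proj_nonzero: "x \<noteq> 0 \<Longrightarrow> sphere_proj x = sgn x"
  by (simp add: sphere_proj_def)

lemma norm_scaleR_sphere_proj: "norm x *\<^sub>R sphere_proj x = x"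
  by (simp add: sphere_proj_def sgn_div_norm)

lemma measurable_sphere_proj: "sphere_proj \<in> borel \<rightarrow>\<^sub>M (sphere_measure :: 'a::euclidean_space measure)"
proof (subst measurable_cong_sets[OF refl sets_sphere_measure], rule measurable_restrict_space2)
  show "sphere_proj \<in> borel_measurable (borel :: 'a measure)"
    unfolding sphere_proj_def sgn_div_norm by measurable
qed (use sphere_proj_in_sphere in blast)

definition radial_measure :: "nat \<Rightarrow> real measure" where
  "radial_measure n = density lborel (\<lambda>t. ennreal (t powr (real n - 1)) * indicator {0..} t)"

lemma sets_radial_measure[simp, measurable_cong]: "sets (radial_measure n) = sets borel"
  by (simp add: radial_measure_def)

lemma sigma_finite_radial_measure: "sigma_finite_measure (radial_measure n)"
  unfolding radial_measure_def
  by (subst sigma_finite_measure.sigma_finite_iff_density_finite[OF sigma_finite_lborel])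
     (auto intro!: AE_I2 split: split_indicator)

lemma emeasure_radial_measure_atMost:
  assumes "1 \<le> n"
  shows "emeasure (radial_measure n) {..a} = (if a < 0 then 0 else ennreal (a ^ n / real n))"
proof -
  have "emeasure (radial_measure n) {..a} = (\<integral>\<^sup>+t. ennreal (t powr (real n - 1)) * indicator {0..a} t \<partial>lborel)"
    unfolding radial_measure_def
    by (subst emeasure_density) (auto intro!: nn_integral_cong simp: indicator_def)
  also have "\<dots> = (if a < 0 then 0 else ennreal (a ^ n / real n))"
  proof (cases "a < 0")
    case False
    then have "((\<lambda>t. t powr (real n - 1)) has_integral (a powr (real n - 1 + 1) / (real n - 1 + 1))) {0..a}"
      using assms by (intro has_integral_powr_from_0) auto
    then show ?thesis
      using False assms by (subst nn_integral_has_integral_lebesgue') (auto simp: powr_realpow')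
  qed (simp add: indicator_def)
  finally show ?thesis .
qed

lemma emeasure_distr_density_indicator:
  fixes E :: "'a::euclidean_space set"
  assumes E: "E \<in> sets borel" and g: "g \<in> borel \<rightarrow>\<^sub>M N" and X: "X \<in> sets N"
  shows "emeasure (distr (density lborel (indicator E)) N g) X = emeasure lborel (E \<inter> g -` X)"
proof -
  have gX: "g -` X \<in> sets borel"
    using measurable_sets[OF g X] by simp
  have "emeasure (distr (density lborel (indicator E)) N g) X = emeasure (density lborel (indicator E)) (g -` X)"
    using X g by (subst emeasure_distr) (auto cong: measurable_cong_sets)
  also have "\<dots> = (\<integral>\<^sup>+x. indicator E x * indicator (g -` X) x \<partial>lborel)"
    using gX E by (subst emeasure_density) auto
  also have "\<dots> = (\<integral>\<^sup>+x. indicator (E \<inter> g -` X) x \<partial>lborel)"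
    by (rule nn_integral_cong) (simp add: indicator_inter_arith)
  also have "\<dots> = emeasure lborel (E \<inter> g -` X)"
    by (rule nn_integral_indicator) (simp add: sets.Int gX E)
  finally show ?thesis .
qed

lemma emeasure_lborel_norm_atMost_sphere_proj:
  assumes B: "B \<in> sets (sphere_measure :: 'a::euclidean_space measure)"
  shows "emeasure lborel {x::'a. norm x \<le> a \<and> sphere_proj x \<in> B} =
    emeasure (radial_measure DIM('a)) {..a} * emeasure sphere_measure B"
proof (cases "a \<le> 0")
  case True
  have "emeasure lborel {x::'a. norm x \<le> a \<and> sphere_proj x \<in> B} \<le> emeasure lborel {0::'a}"
    using True by (intro emeasure_mono) (auto, metis norm_le_zero_iff order.trans)
  also have "\<dots> = 0"
    using countable_imp_null_set_lborel[of "{0::'a}"] by auto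
  finally have "emeasure lborel {x::'a. norm x \<le> a \<and> sphere_proj x \<in> B} = 0"
    by simp
  moreover have "emeasure (radial_measure DIM('a)) {..a} = 0"
    using True by (subst emeasure_radial_measure_atMost) (auto simp: DIM_positive)
  ultimately show ?thesis
    by simp
next
  case False
  then have a: "0 < a"
    by simp
  have B': "B \<in> sets (restrict_space borel (sphere (0::'a) 1))"
    using B sets_sphere_measure by auto
  define C where "C = {x::'a. x \<noteq> 0 \<and> norm x \<le> a \<and> sphere_proj x \<in> B}"
  have "C = (cball 0 a - {0}) \<inter> sphere_proj -` B"
    by (auto simp: C_def)
  also have "\<dots> \<in> sets borel"
    using measurable_sets[OF measurable_sphere_proj B]
    by (intro sets.Int) (auto intro: sets.Diff borel_closed)
  finally have C: "C \<in> sets borel" .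
  have null: "{0} \<inter> {x::'a. norm x \<le> a \<and> sphere_proj x \<in> B} \<in> null_sets lborel"
    by (rule countable_imp_null_set_lborel, rule countable_subset[of _ "{0}"]) auto
  have split: "{x::'a. norm x \<le> a \<and> sphere_proj x \<in> B} = C \<union> ({0} \<inter> {x. norm x \<le> a \<and> sphere_proj x \<in> B})"
    unfolding C_def by auto
  have "emeasure lborel {x::'a. norm x \<le> a \<and> sphere_proj x \<in> B} = emeasure lborel C"
    using emeasure_Un_null_set[of C lborel, OF _ null] C split by simp
  also have "\<dots> = ennreal (a ^ DIM('a)) * emeasure lborel {x. a *\<^sub>R x \<in> C}"
    by (rule emeasure_lborel_scaleR_preimage[OF a C])
  also have "{x. a *\<^sub>R x \<in> C} = solid_cone B"
  proof (intro set_eqI)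
    fix x :: 'a
    have "sphere_proj (a *\<^sub>R x) = sphere_proj x"
      using a by (simp add: sphere_proj_def sgn_scaleR)
    then show "x \<in> {x. a *\<^sub>R x \<in> C} \<longleftrightarrow> x \<in> solid_cone B"
      using a by (auto simp: C_def solid_cone_def sphere_proj_nonzero)
  qed
  also have "ennreal (a ^ DIM('a)) = ennreal (a ^ DIM('a) / real DIM('a)) * of_nat DIM('a)"
    using a by (simp add: ennreal_of_nat_eq_real_of_nat ennreal_mult'[symmetric] DIM_positive)
  finally show ?thesis
    using a B' by (simp add: emeasure_radial_measure_atMost DIM_positive emeasure_sphere_measure mult.assoc)
qed

lemma emeasure_lborel_polar_rectangle:
  assumes B: "B \<in> sets (sphere_measure :: 'a::euclidean_space measure)" and A: "A \<in> sets borel"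
  shows "emeasure lborel {x::'a. norm x \<in> A \<and> sphere_proj x \<in> B} =
    emeasure (radial_measure DIM('a)) A * emeasure sphere_measure B"
proof -
  have proj_B: "sphere_proj -` B \<in> sets borel"
    using measurable_sets[OF measurable_sphere_proj B] by simp
  define N1 where "N1 = distr (density lborel (indicator (sphere_proj -` B))) borel (norm :: 'a \<Rightarrow> real)"
  define N2 where "N2 = density (radial_measure DIM('a)) (\<lambda>_. emeasure sphere_measure B)"
  have N1: "emeasure N1 X = emeasure lborel {x::'a. norm x \<in> X \<and> sphere_proj x \<in> B}"
    if "X \<in> sets borel" for X
  proof -
    have "emeasure N1 X = emeasure lborel (sphere_proj -` B \<inter> norm -` X)"
      unfolding N1_def using proj_B that by (intro emeasure_distr_density_indicator) auto
    also have "sphere_proj -` B \<inter> norm -` X = {x::'a. norm x \<in> X \<and> sphere_proj x \<in> B}"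
      by auto
    finally show ?thesis .
  qed
  have N2: "emeasure N2 X = emeasure (radial_measure DIM('a)) X * emeasure sphere_measure B"
    if "X \<in> sets borel" for X
    unfolding N2_def using that by (simp add: emeasure_density_const mult.commute)
  have "N1 = N2"
  proof (rule measure_eqI_atMost)
    show "sets N1 = sets borel" "sets N2 = sets borel"
      by (simp_all add: N1_def N2_def)
    show "emeasure N1 {..a} = emeasure N2 {..a}" for a
      using N1[of "{..a}"] N2[of "{..a}"] emeasure_lborel_norm_atMost_sphere_proj[OF B, of a] by simp
    show "emeasure N1 {..a} < \<infinity>" for a
    proof -
      have "emeasure N1 {..a} \<le> emeasure lborel (cball (0::'a) \<bar>a\<bar>)"
        using N1[of "{..a}"] by (simp, intro emeasure_mono) auto
      also have "\<dots> < \<infinity>"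
        by (rule emeasure_lborel_cball_finite)
      finally show ?thesis .
    qed
  qed
  then show ?thesis
    using N1[OF A] N2[OF A] by simp
qed

lemma lborel_polar:
  "distr lborel (borel \<Otimes>\<^sub>M sphere_measure) (\<lambda>x::'a::euclidean_space. (norm x, sphere_proj x)) =
    radial_measure DIM('a) \<Otimes>\<^sub>M sphere_measure"
proof (rule pair_measure_eqI[symmetric])
  interpret finite_measure "sphere_measure :: 'a measure"
    by (rule finite_measure_sphere_measure)
  show "sigma_finite_measure (radial_measure DIM('a))"
    by (rule sigma_finite_radial_measure)
  show "sigma_finite_measure (sphere_measure :: 'a measure)"
    by unfold_locales
  have pol: "(\<lambda>x::'a. (norm x, sphere_proj x)) \<in> borel \<rightarrow>\<^sub>M borel \<Otimes>\<^sub>M sphere_measure"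
    by (intro measurable_Pair borel_measurable_norm measurable_sphere_proj)
  fix A B assume "A \<in> sets (radial_measure DIM('a))" and "B \<in> sets (sphere_measure :: 'a measure)"
  then show "emeasure (radial_measure DIM('a)) A * emeasure sphere_measure B =
      emeasure (distr lborel (borel \<Otimes>\<^sub>M sphere_measure) (\<lambda>x::'a. (norm x, sphere_proj x))) (A \<times> B)"
    using pol by (simp add: emeasure_distr emeasure_lborel_polar_rectangle vimage_def)
qed simp

lemma nn_integral_polar:
  fixes f :: "'a::euclidean_space \<Rightarrow> ennreal"
  assumes f[measurable]: "f \<in> borel_measurable borel"
  shows "(\<integral>\<^sup>+x. f x \<partial>lborel) = (\<integral>\<^sup>+u. (\<integral>\<^sup>+t. f (t *\<^sub>R u) \<partial>radial_measure DIM('a)) \<partial>sphere_measure)"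
proof -
  interpret finite_measure "sphere_measure :: 'a measure"
    by (rule finite_measure_sphere_measure)
  interpret radial: sigma_finite_measure "radial_measure DIM('a)"
    by (rule sigma_finite_radial_measure)
  interpret pair_sigma_finite "radial_measure DIM('a)" "sphere_measure :: 'a measure" ..
  have [measurable]: "(\<lambda>p. snd p) \<in> (borel \<Otimes>\<^sub>M (sphere_measure :: 'a measure)) \<rightarrow>\<^sub>M (borel :: 'a measure)"
    by (rule measurable_compose[OF measurable_snd measurable_sphere_measure_id])
  have g: "(\<lambda>p. f (fst p *\<^sub>R snd p)) \<in> borel_measurable (borel \<Otimes>\<^sub>M (sphere_measure :: 'a measure))"
    by measurable
  then have g': "(\<lambda>p. f (fst p *\<^sub>R snd p)) \<in> borel_measurable (radial_measure DIM('a) \<Otimes>\<^sub>M sphere_measure)"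
    by (simp cong: measurable_cong_sets)
  have pol: "(\<lambda>x::'a. (norm x, sphere_proj x)) \<in> lborel \<rightarrow>\<^sub>M borel \<Otimes>\<^sub>M sphere_measure"
    by (simp add: measurable_Pair measurable_sphere_proj cong: measurable_cong_sets)
  have "(\<integral>\<^sup>+x. f x \<partial>lborel) = (\<integral>\<^sup>+x. f (norm x *\<^sub>R sphere_proj x) \<partial>lborel)"
    by (simp add: norm_scaleR_sphere_proj)
  also have "\<dots> = (\<integral>\<^sup>+p. f (fst p *\<^sub>R snd p) \<partial>distr lborel (borel \<Otimes>\<^sub>M sphere_measure) (\<lambda>x::'a. (norm x, sphere_proj x)))"
    using g pol by (subst nn_integral_distr) auto
  also have "\<dots> = (\<integral>\<^sup>+u. (\<integral>\<^sup>+t. f (t *\<^sub>R u) \<partial>radial_measure DIM('a)) \<partial>sphere_measure)"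
    using nn_integral_snd[OF g'] by (simp add: lborel_polar)
  finally show ?thesis .
qed

lemma nn_integral_powr_atLeastAtMost:
  assumes "-1 < a" and "0 \<le> c"
  shows "(\<integral>\<^sup>+t. ennreal (t powr a) * indicator {0..c} t \<partial>lborel) = ennreal (c powr (a + 1) / (a + 1))"
  by (rule nn_integral_has_integral_lebesgue') (use assms in \<open>auto intro: has_integral_powr_from_0\<close>)

definition powr_density :: "real \<Rightarrow> real \<Rightarrow> real measure" where
  "powr_density c p = density lborel (\<lambda>t. ennreal (c * t powr p) * indicator {0..1} t)"

lemma sets_powr_density[simp, measurable_cong]: "sets (powr_density c p) = sets borel"
  by (simp add: powr_density_def)

lemma sigma_finite_powr_density: "sigma_finite_measure (powr_density c p)"
  unfolding powr_density_def
  by (subst sigma_finite_measure.sigma_finite_iff_density_finite[OF sigma_finite_lborel])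
     (auto intro!: AE_I2 split: split_indicator)

lemma emeasure_powr_density_atMost:
  assumes p: "-1 < p" and c: "0 \<le> c"
  shows "emeasure (powr_density c p) {..a} =
    (if a < 0 then 0 else ennreal (c * (min a 1 powr (p + 1) / (p + 1))))"
proof -
  have "emeasure (powr_density c p) {..a} =
      (\<integral>\<^sup>+t. ennreal (c * t powr p) * indicator {0..min a 1} t \<partial>lborel)"
    unfolding powr_density_def
    by (subst emeasure_density) (auto intro!: nn_integral_cong simp: indicator_def)
  also have "\<dots> = (if a < 0 then 0 else ennreal (c * (min a 1 powr (p + 1) / (p + 1))))"
  proof (cases "a < 0")
    case False
    then have "((\<lambda>t. c * t powr p) has_integral (c * (min a 1 powr (p + 1) / (p + 1)))) {0..min a 1}"
      using p by (intro has_integral_mult_right has_integral_powr_from_0) auto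
    then show ?thesis
      using False c by (subst nn_integral_has_integral_lebesgue') auto
  qed (simp add: indicator_def)
  finally show ?thesis .
qed

lemma borel_measurable_nn_integral_lborel:
  fixes f :: "real \<Rightarrow> real \<Rightarrow> real"
  assumes "(\<lambda>(x, y). f x y) \<in> borel_measurable (borel \<Otimes>\<^sub>M borel)"
  shows "(\<lambda>x. \<integral>\<^sup>+y. ennreal (f x y) \<partial>lborel) \<in> borel_measurable borel"
proof -
  have "(\<lambda>(x, y). ennreal (f x y)) \<in> borel_measurable (lborel \<Otimes>\<^sub>M lborel)"
    using assms by (simp cong: measurable_cong_sets)
  then have "(\<lambda>x. \<integral>\<^sup>+y. ennreal (f x y) \<partial>lborel) \<in> borel_measurable lborel"
    by (rule lborel.borel_measurable_nn_integral)
  then show ?thesis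
    by (simp cong: measurable_cong_sets)
qed

lemma nn_integral_inverse_atLeastAtMost_eq_infinity:
  assumes c: "0 < c"
  shows "(\<integral>\<^sup>+t. ennreal (t powr -1) * indicator {0..c} t \<partial>lborel) = \<infinity>"
proof (rule ccontr)
  let ?I = "\<integral>\<^sup>+t. ennreal (t powr -1) * indicator {0..c} t \<partial>lborel"
  assume "?I \<noteq> \<infinity>"
  then obtain x where x: "?I = ennreal x" "0 \<le> x"
    by (cases ?I rule: ennreal_cases) auto
  define e where "e = c * exp (- (x + 1))"
  have e: "0 < e" "e \<le> c"
    using c x(2) by (auto simp: e_def mult_le_cancel_left1)
  have "((\<lambda>t. 1 / t) has_integral (ln c - ln e)) {e..c}"
  proof (rule fundamental_theorem_of_calculus[OF e(2)])
    fix t assume "t \<in> {e..c}"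
    then have "0 < t"
      using e by auto
    then show "(ln has_vector_derivative 1 / t) (at t within {e..c})"
      using DERIV_ln_divide[of t]
      by (simp add: has_real_derivative_iff_has_vector_derivative[symmetric] has_field_derivative_at_within)
  qed
  then have "(\<integral>\<^sup>+t. ennreal (1 / t) * indicator {e..c} t \<partial>lborel) = ennreal (ln c - ln e)"
    using e by (intro nn_integral_has_integral_lebesgue') auto
  moreover have "(\<integral>\<^sup>+t. ennreal (1 / t) * indicator {e..c} t \<partial>lborel) \<le> ?I"
    using e by (intro nn_integral_mono) (auto simp: indicator_def)
  moreover have "ln c - ln e = x + 1"
    using c by (simp add: e_def ln_mult)
  ultimately show False
    using x by simp
qed

lemma nn_integral_powr_atLeastAtMost_eq_infinity:
  assumes p: "p \<le> -1" and c: "0 < c"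
  shows "(\<integral>\<^sup>+t. ennreal (t powr p) * indicator {0..c} t \<partial>lborel) = \<infinity>"
proof -
  have "\<infinity> = ennreal (c powr (p + 1)) * (\<integral>\<^sup>+t. ennreal (t powr -1) * indicator {0..c} t \<partial>lborel)"
    using c by (simp only: nn_integral_inverse_atLeastAtMost_eq_infinity[OF c]) (simp add: ennreal_mult_top)
  also have "\<dots> = (\<integral>\<^sup>+t. ennreal (c powr (p + 1)) * (ennreal (t powr -1) * indicator {0..c} t) \<partial>lborel)"
    by (rule nn_integral_cmult[symmetric]) measurable
  also have "\<dots> \<le> (\<integral>\<^sup>+t. ennreal (t powr p) * indicator {0..c} t \<partial>lborel)"
  proof (intro nn_integral_mono)
    fix t :: real
    show "ennreal (c powr (p + 1)) * (ennreal (t powr -1) * indicator {0..c} t) \<le>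
        ennreal (t powr p) * indicator {0..c} t"
    proof (cases "0 < t \<and> t \<le> c")
      case True
      have "c powr (p + 1) * t powr -1 \<le> t powr (p + 1) * t powr -1"
        using True p by (intro mult_right_mono powr_mono2') auto
      also have "\<dots> = t powr ((p + 1) + -1)"
        by (simp only: powr_add)
      also have "\<dots> = t powr p"
        by simp
      finally show ?thesis
        using True by (simp add: ennreal_mult'[symmetric] ennreal_leI)
    qed (auto simp: indicator_def)
  qed
  finally show ?thesis
    by (simp add: top_unique)
qed

section \<open>Dual curvature measures of star bodies with conical Gauss image\<close>

lemma radial_fun_eqI:
  assumes "{t. 0 < t \<and> t *\<^sub>R u \<in> K} = {0<..\<rho>}" and "0 < \<rho>"
  shows "radial_fun K u = \<rho>"
  unfolding radial_fun_def assms(1) using assms(2) by simp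

lemma nn_integral_radial_measure_ray_powr:
  fixes K C :: "'a::euclidean_space set" and q :: real
  assumes [measurable]: "K \<in> sets borel" "C \<in> sets borel"
    and ray: "{t. 0 < t \<and> t *\<^sub>R u \<in> K} = {0<..\<rho>}" and \<rho>: "0 < \<rho>" and u: "norm u = 1"
    and cone: "\<And>t x. 0 < t \<Longrightarrow> t *\<^sub>R x \<in> C \<longleftrightarrow> x \<in> C"
    and q: "0 < q"
  shows "(\<integral>\<^sup>+t. indicator (K \<inter> C) (t *\<^sub>R u) * ennreal (norm (t *\<^sub>R u) powr (q - DIM('a))) \<partial>radial_measure DIM('a)) =
    indicator C u * ennreal (\<rho> powr q / q)"
proof -
  let ?n = "real DIM('a)"
  define f where "f t = indicator (K \<inter> C) (t *\<^sub>R u) * ennreal (norm (t *\<^sub>R u) powr (q - ?n))" for t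
  have pointwise: "ennreal (t powr (?n - 1)) * indicator {0..} t * f t =
      indicator C u * (ennreal (t powr (q - 1)) * indicator {0..\<rho>} t)" for t
  proof (cases "0 < t")
    case True
    have "t \<in> {t. 0 < t \<and> t *\<^sub>R u \<in> K} \<longleftrightarrow> t \<in> {0<..\<rho>}"
      by (simp only: ray)
    then have "t *\<^sub>R u \<in> K \<longleftrightarrow> t \<in> {0..\<rho>}"
      using True by simp
    then have fK: "f t = indicator C u * (indicator {0..\<rho>} t * ennreal (t powr (q - ?n)))"
      using True u cone[OF True, of u] by (simp add: f_def indicator_def)
    have "ennreal (t powr (?n - 1)) * indicator {0..} t * f t =
        indicator C u * ((ennreal (t powr (?n - 1)) * ennreal (t powr (q - ?n))) * indicator {0..\<rho>} t)"
      using True by (simp add: fK mult_ac)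
    also have "ennreal (t powr (?n - 1)) * ennreal (t powr (q - ?n)) = ennreal (t powr (q - 1))"
      using True by (simp add: ennreal_mult'[symmetric] powr_add[symmetric])
    finally show ?thesis .
  next
    case False
    then show ?thesis
      by (cases "t = 0") (simp_all add: f_def indicator_def)
  qed
  have "(\<integral>\<^sup>+t. f t \<partial>radial_measure DIM('a)) = (\<integral>\<^sup>+t. ennreal (t powr (?n - 1)) * indicator {0..} t * f t \<partial>lborel)"
    unfolding radial_measure_def f_def by (rule nn_integral_density) measurable
  also have "\<dots> = (\<integral>\<^sup>+t. indicator C u * (ennreal (t powr (q - 1)) * indicator {0..\<rho>} t) \<partial>lborel)"
    by (simp only: pointwise)
  also have "\<dots> = indicator C u * (\<integral>\<^sup>+t. ennreal (t powr (q - 1)) * indicator {0..\<rho>} t \<partial>lborel)"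
    by (rule nn_integral_cmult) measurable
  also have "\<dots> = indicator C u * ennreal (\<rho> powr q / q)"
    using q \<rho> by (simp add: nn_integral_powr_atLeastAtMost)
  finally show ?thesis
    by (simp add: f_def)
qed

lemma nn_integral_star_cone_powr:
  fixes K C :: "'a::euclidean_space set"
  assumes K[measurable]: "K \<in> sets borel" and C[measurable]: "C \<in> sets borel"
    and ray: "\<And>u. u \<in> sphere 0 1 \<Longrightarrow> {t. 0 < t \<and> t *\<^sub>R u \<in> K} = {0<..radial_fun K u}"
    and pos: "\<And>u. u \<in> sphere 0 1 \<Longrightarrow> 0 < radial_fun K u"
    and cone: "\<And>t x. 0 < t \<Longrightarrow> t *\<^sub>R x \<in> C \<longleftrightarrow> x \<in> C"
    and radial[measurable]: "radial_fun K \<in> borel_measurable sphere_measure"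
    and q: "0 < q"
  shows "ennreal q * (\<integral>\<^sup>+x. indicator (K \<inter> C) x * ennreal (norm x powr (q - DIM('a))) \<partial>lborel) =
    (\<integral>\<^sup>+u. indicator C u * ennreal (radial_fun K u powr q) \<partial>sphere_measure)"
proof -
  have "(\<integral>\<^sup>+x. indicator (K \<inter> C) x * ennreal (norm x powr (q - DIM('a))) \<partial>lborel) =
      (\<integral>\<^sup>+u. (\<integral>\<^sup>+t. indicator (K \<inter> C) (t *\<^sub>R u) * ennreal (norm (t *\<^sub>R u) powr (q - DIM('a)))
        \<partial>radial_measure DIM('a)) \<partial>sphere_measure)"
    by (rule nn_integral_polar) measurable
  also have "\<dots> = (\<integral>\<^sup>+u. indicator C u * ennreal (radial_fun K u powr q / q) \<partial>sphere_measure)"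
  proof (rule nn_integral_cong)
    fix u :: 'a
    assume "u \<in> space sphere_measure"
    then have u: "u \<in> sphere 0 1"
      by (simp add: space_sphere_measure)
    then show "(\<integral>\<^sup>+t. indicator (K \<inter> C) (t *\<^sub>R u) * ennreal (norm (t *\<^sub>R u) powr (q - DIM('a)))
        \<partial>radial_measure DIM('a)) = indicator C u * ennreal (radial_fun K u powr q / q)"
      by (intro nn_integral_radial_measure_ray_powr[OF K C ray[OF u] pos[OF u] _ cone q]) simp
  qed
  finally have "ennreal q * (\<integral>\<^sup>+x. indicator (K \<inter> C) x * ennreal (norm x powr (q - DIM('a))) \<partial>lborel) =
      ennreal q * (\<integral>\<^sup>+u. indicator C u * ennreal (radial_fun K u powr q / q) \<partial>sphere_measure)"
    by simp
  also have "\<dots> = (\<integral>\<^sup>+u. ennreal q * (indicator C u * ennreal (radial_fun K u powr q / q)) \<partial>sphere_measure)"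
  proof (rule nn_integral_cmult[symmetric])
    have "indicator C \<in> borel_measurable sphere_measure"
      by (rule measurable_compose[OF measurable_sphere_measure_id]) measurable
    then show "(\<lambda>u. indicator C u * ennreal (radial_fun K u powr q / q)) \<in> borel_measurable sphere_measure"
      by measurable
  qed
  also have "\<dots> = (\<integral>\<^sup>+u. indicator C u * ennreal (radial_fun K u powr q) \<partial>sphere_measure)"
  proof (rule nn_integral_cong)
    fix u
    have "ennreal q * ennreal (radial_fun K u powr q / q) = ennreal (radial_fun K u powr q)"
      using q by (simp add: ennreal_mult'[symmetric])
    then show "ennreal q * (indicator C u * ennreal (radial_fun K u powr q / q)) =
        indicator C u * ennreal (radial_fun K u powr q)"
      by (metis mult.left_commute)
  qed
  finally show ?thesis .
qed

lemma radial_fun_le: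
  assumes "{t. 0 < t \<and> t *\<^sub>R u \<in> K} = {0<..radial_fun K u}" and "0 < radial_fun K u"
    and "norm u = 1" and "K \<subseteq> cball 0 R"
  shows "radial_fun K u \<le> R"
proof -
  have "radial_fun K u \<in> {t. 0 < t \<and> t *\<^sub>R u \<in> K}"
    unfolding assms(1) using assms(2) by simp
  then have "radial_fun K u *\<^sub>R u \<in> cball 0 R"
    using assms(4) by blast
  then show ?thesis
    using assms(2,3) by simp
qed

lemma integrable_indicator_radial_fun_powr:
  fixes K C :: "'a::euclidean_space set"
  assumes K: "K \<subseteq> cball 0 R" and C[measurable]: "C \<in> sets borel"
    and ray: "\<And>u. u \<in> sphere 0 1 \<Longrightarrow> {t. 0 < t \<and> t *\<^sub>R u \<in> K} = {0<..radial_fun K u}"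
    and pos: "\<And>u. u \<in> sphere 0 1 \<Longrightarrow> 0 < radial_fun K u"
    and radial[measurable]: "radial_fun K \<in> borel_measurable sphere_measure"
    and q: "0 < q"
  shows "integrable sphere_measure (\<lambda>u. indicator C u * radial_fun K u powr q)"
proof (rule finite_measure.integrable_const_bound[OF finite_measure_sphere_measure, where B="R powr q"])
  show "AE u in sphere_measure. norm (indicator C u * radial_fun K u powr q) \<le> R powr q"
  proof (rule AE_I2)
    fix u :: 'a assume "u \<in> space sphere_measure"
    then have u: "u \<in> sphere 0 1"
      by (simp add: space_sphere_measure)
    have "radial_fun K u powr q \<le> R powr q"
      using radial_fun_le[OF ray[OF u] pos[OF u] _ K] u pos[OF u] q by (intro powr_mono2) auto
    then show "norm (indicator C u * radial_fun K u powr q) \<le> R powr q"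
      by (simp add: indicator_def)
  qed
  have [measurable]: "(indicator C :: 'a \<Rightarrow> real) \<in> borel_measurable sphere_measure"
    by (rule measurable_compose[OF measurable_sphere_measure_id]) measurable
  show "(\<lambda>u. indicator C u * radial_fun K u powr q) \<in> borel_measurable sphere_measure"
    by measurable
qed

lemma dual_curv_measure_star_cone:
  fixes K C :: "'a::euclidean_space set"
  assumes K[measurable]: "K \<in> sets borel" "K \<subseteq> cball 0 R" and C[measurable]: "C \<in> sets borel"
    and ray: "\<And>u. u \<in> sphere 0 1 \<Longrightarrow> {t. 0 < t \<and> t *\<^sub>R u \<in> K} = {0<..radial_fun K u}"
    and pos: "\<And>u. u \<in> sphere 0 1 \<Longrightarrow> 0 < radial_fun K u"
    and cone: "\<And>t x. 0 < t \<Longrightarrow> t *\<^sub>R x \<in> C \<longleftrightarrow> x \<in> C"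
    and radial[measurable]: "radial_fun K \<in> borel_measurable sphere_measure"
    and eta: "rev_radial_gauss K \<eta> = sphere 0 1 \<inter> C"
    and q: "0 < q"
  shows "dual_curv_measure q K \<eta> = q / real DIM('a) *
      enn2real (\<integral>\<^sup>+x. indicator (K \<inter> C) x * ennreal (norm x powr (q - DIM('a))) \<partial>lborel)"
    and "(\<integral>\<^sup>+x. indicator (K \<inter> C) x * ennreal (norm x powr (q - DIM('a))) \<partial>lborel) < \<infinity>"
proof -
  let ?I = "\<integral>\<^sup>+x. indicator (K \<inter> C) x * ennreal (norm x powr (q - DIM('a))) \<partial>lborel"
  define g where "g u = indicator C u * radial_fun K u powr q" for u :: 'a
  have g_nonneg: "0 \<le> g u" for u
    by (simp add: g_def)
  have "integrable sphere_measure g"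
    unfolding g_def by (rule integrable_indicator_radial_fun_powr[OF K(2) C ray pos radial q])
  then have "ennreal (integral\<^sup>L sphere_measure g) = (\<integral>\<^sup>+u. ennreal (g u) \<partial>sphere_measure)"
    by (rule nn_integral_eq_integral[symmetric]) (simp add: g_nonneg)
  also have "\<dots> = ennreal q * ?I"
    using nn_integral_star_cone_powr[OF K(1) C ray pos cone radial q]
    by (auto intro!: nn_integral_cong simp: g_def indicator_def)
  finally have I: "ennreal (integral\<^sup>L sphere_measure g) = ennreal q * ?I" .
  show "?I < \<infinity>"
  proof (rule ccontr)
    assume "\<not> ?I < \<infinity>"
    then have "?I = \<infinity>"
      by (metis infinity_ennreal_def less_top)
    then have "ennreal q * ?I = \<infinity>"
      using q by (simp add: ennreal_mult_eq_top_iff)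
    with I show False
      by simp
  qed
  have "dual_curv_measure q K \<eta> = 1 / real DIM('a) * integral\<^sup>L sphere_measure g"
    unfolding dual_curv_measure_def set_lebesgue_integral_def eta
    by (intro arg_cong[where f="\<lambda>z. 1 / real DIM('a) * z"] Bochner_Integration.integral_cong)
       (auto simp: g_def space_sphere_measure indicator_def)
  also have "integral\<^sup>L sphere_measure g = q * enn2real ?I"
  proof -
    have "0 \<le> integral\<^sup>L sphere_measure g"
      by (rule Bochner_Integration.integral_nonneg) (simp add: g_nonneg)
    then show ?thesis
      using arg_cong[OF I, of enn2real] q by (simp add: enn2real_mult)
  qed
  finally show "dual_curv_measure q K \<eta> = q / real DIM('a) * enn2real ?I"
    by simp
qed

section \<open>Cylinders over a coordinate subspace\<close>

lemma coordinate_hyperplane_null: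
  assumes "j \<in> Basis"
  shows "{x::'a::euclidean_space. x \<bullet> j = 0} \<in> null_sets lborel"
  using negligible_hyperplane[of j 0] nonzero_Basis[OF assms]
  by (simp add: negligible_iff_null_sets null_sets_completion_iff inner_commute)

lemma tendsto_divide_add_bounded:
  fixes T R :: "nat \<Rightarrow> real"
  assumes T: "filterlim T at_top sequentially" and R: "\<And>l. 0 \<le> R l" "\<And>l. R l \<le> c"
  shows "(\<lambda>l. T l / (T l + R l)) \<longlonglongrightarrow> 1"
proof -
  have pos: "\<forall>\<^sub>F l in sequentially. 0 < T l"
    using T by (simp add: filterlim_at_top_dense)
  have "(\<lambda>l. R l / (T l + R l)) \<longlonglongrightarrow> 0"
  proof (rule tendsto_sandwich[OF _ _ tendsto_const])
    show "\<forall>\<^sub>F l in sequentially. 0 \<le> R l / (T l + R l)"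
      using pos by eventually_elim (use R(1) in \<open>auto intro!: divide_nonneg_nonneg add_nonneg_nonneg\<close>)
    show "\<forall>\<^sub>F l in sequentially. R l / (T l + R l) \<le> c / T l"
      using pos
    proof eventually_elim
      case (elim l)
      have "R l / (T l + R l) \<le> R l / T l"
        using elim R(1)[of l] by (intro divide_left_mono) (auto intro!: mult_pos_pos add_pos_nonneg)
      also have "\<dots> \<le> c / T l"
        using R(2)[of l] elim by (intro divide_right_mono) auto
      finally show ?case .
    qed
    show "(\<lambda>l. c / T l) \<longlonglongrightarrow> 0"
      by (intro tendsto_divide_0[OF tendsto_const] filterlim_at_top_imp_at_infinity T)
  qed
  then have "(\<lambda>l. 1 - R l / (T l + R l)) \<longlonglongrightarrow> 1 - 0"
    by (intro tendsto_diff tendsto_const)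
  moreover have "\<forall>\<^sub>F l in sequentially. 1 - R l / (T l + R l) = T l / (T l + R l)"
    using pos
  proof eventually_elim
    case (elim l)
    then have "0 < T l + R l"
      using R(1)[of l] by simp
    then show ?case
      by (simp add: field_simps)
  qed
  ultimately show ?thesis
    by (simp add: tendsto_cong)
qed

lemma UNIV_in_sets_pair_borel: "UNIV \<in> sets (borel \<Otimes>\<^sub>M (borel :: real measure))"
  using sets.top[of "borel \<Otimes>\<^sub>M (borel :: real measure)"] by (simp add: space_pair_measure)

lemma borel_set_snd_le_fst[measurable]: "{(\<tau>, s). s \<le> \<tau>} \<in> sets (borel \<Otimes>\<^sub>M (borel :: real measure))"
proof -
  have "Measurable.pred (borel \<Otimes>\<^sub>M borel) (\<lambda>p::real \<times> real. snd p \<le> fst p)"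
    by measurable
  then show ?thesis
    by (simp add: pred_def case_prod_beta' space_pair_measure)
qed

locale coordinate_split =
  fixes B :: "'a::euclidean_space set"
  assumes B_subset: "B \<subseteq> Basis" and B_nonempty: "B \<noteq> {}" and B_proper: "B \<noteq> Basis"
begin

definition projL :: "'a \<Rightarrow> 'a" where
  "projL x = (\<Sum>j\<in>B. (x \<bullet> j) *\<^sub>R j)"

definition projM :: "'a \<Rightarrow> 'a" where
  "projM x = x - projL x"

lemma finite_B: "finite B"
  using B_subset finite_Basis by (rule finite_subset)

lemma inner_projL_Basis:
  assumes "j \<in> Basis"
  shows "projL x \<bullet> j = (if j \<in> B then x \<bullet> j else 0)"
proof -
  have "projL x \<bullet> j = (\<Sum>i\<in>B. if i = j then x \<bullet> i else 0)"
    unfolding projL_def inner_sum_left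
    using B_subset assms by (intro sum.cong) (auto simp: inner_Basis)
  also have "\<dots> = (if j \<in> B then x \<bullet> j else 0)"
    using finite_B by (simp add: sum.delta')
  finally show ?thesis .
qed

lemma inner_projM_Basis:
  assumes "j \<in> Basis"
  shows "projM x \<bullet> j = (if j \<in> B then 0 else x \<bullet> j)"
  using assms by (simp add: projM_def inner_diff_left inner_projL_Basis)

lemma projL_add_projM: "projL x + projM x = x"
  by (simp add: projM_def)

lemma inner_projL_projM: "projL x \<bullet> projM y = 0"
  by (subst euclidean_inner, rule sum.neutral) (simp add: inner_projL_Basis inner_projM_Basis)

lemma norm_projL_projM: "(norm x)\<^sup>2 = (norm (projL x))\<^sup>2 + (norm (projM x))\<^sup>2"
  using norm_add_Pythagorean[of "projL x" "projM x"]
  by (simp add: orthogonal_def inner_projL_projM projL_add_projM)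

lemma norm_projL_le: "norm (projL x) \<le> norm x"
proof -
  have "(norm (projL x))\<^sup>2 \<le> (norm x)\<^sup>2"
    using norm_projL_projM[of x] by simp
  then show ?thesis
    by (rule power2_le_imp_le) simp
qed

lemma norm_projM_le: "norm (projM x) \<le> norm x"
proof -
  have "(norm (projM x))\<^sup>2 \<le> (norm x)\<^sup>2"
    using norm_projL_projM[of x] by simp
  then show ?thesis
    by (rule power2_le_imp_le) simp
qed

lemma norm_le_norm_projL_add_norm_projM: "norm x \<le> norm (projL x) + norm (projM x)"
  using norm_triangle_ineq[of "projL x" "projM x"] by (simp add: projL_add_projM)

lemma linear_projL: "linear projL"
  by (rule linearI) (simp_all add: projL_def inner_add_left scaleR_add_left sum.distrib scaleR_sum_right)

lemma linear_projM: "linear projM"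
  unfolding projM_def by (intro linear_compose_sub linear_ident linear_projL)

lemma projL_scaleR[simp]: "projL (c *\<^sub>R x) = c *\<^sub>R projL x"
  and projM_scaleR[simp]: "projM (c *\<^sub>R x) = c *\<^sub>R projM x"
  and projL_uminus[simp]: "projL (- x) = - projL x"
  and projM_uminus[simp]: "projM (- x) = - projM x"
  using linear_projL linear_projM by (simp_all add: linear_scale linear_neg)

lemma projL_add: "projL (x + y) = projL x + projL y"
  and projM_add: "projM (x + y) = projM x + projM y"
  using linear_projL linear_projM by (simp_all add: linear_add)

lemma continuous_on_projL[continuous_intros]: "continuous_on S projL"
  and continuous_on_projM[continuous_intros]: "continuous_on S projM"
  using linear_projL linear_projM by (simp_all add: linear_continuous_on linear_linear)

lemma borel_measurable_projL[measurable]: "projL \<in> borel_measurable borel"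
  and borel_measurable_projM[measurable]: "projM \<in> borel_measurable borel"
  by (simp_all add: borel_measurable_continuous_onI continuous_on_projL continuous_on_projM)

lemma projL_projM[simp]: "projL (projM x) = 0"
  and projM_projM[simp]: "projM (projM x) = projM x"
  by (simp_all add: euclidean_eq_iff[where 'a='a] inner_projL_Basis inner_projM_Basis)

lemma projL_in_span: "projL x \<in> span B"
  unfolding projL_def by (intro span_sum span_mul span_base)

lemma projM_span:
  assumes "v \<in> span B"
  shows "projM v = 0"
proof -
  have "projM j = 0" if j: "j \<in> B" for j
  proof (rule euclidean_eqI)
    fix b :: 'a
    assume "b \<in> Basis"
    moreover have "j \<in> Basis"
      using j B_subset by blast
    ultimately show "projM j \<bullet> b = 0 \<bullet> b"
      using j by (auto simp: inner_projM_Basis inner_Basis)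
  qed
  then show ?thesis
    using linear_eq_0_on_span[OF linear_projM _ assms] by blast
qed

lemma projL_span: "v \<in> span B \<Longrightarrow> projL v = v"
  using projM_span by (simp add: projM_def)

lemma inner_projL_self: "u \<bullet> projL u = (norm (projL u))\<^sup>2"
proof -
  have "u \<bullet> projL u = (projL u + projM u) \<bullet> projL u"
    by (simp add: projL_add_projM)
  also have "\<dots> = (norm (projL u))\<^sup>2"
    by (simp add: inner_add_left inner_commute[of "projM u"] inner_projL_projM power2_norm_eq_inner)
  finally show ?thesis .
qed

lemma inner_projM_self: "u \<bullet> projM u = (norm (projM u))\<^sup>2"
proof -
  have "u \<bullet> projM u = (projL u + projM u) \<bullet> projM u"
    by (simp add: projL_add_projM)
  also have "\<dots> = (norm (projM u))\<^sup>2"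
    by (simp add: inner_add_left inner_projL_projM power2_norm_eq_inner)
  finally show ?thesis .
qed

lemma inner_projL_le:
  assumes "v \<in> span B"
  shows "u \<bullet> v \<le> norm (projL u) * norm v"
proof -
  have "u \<bullet> v = projL u \<bullet> v + projM u \<bullet> v"
    by (simp only: projL_add_projM inner_add_left[symmetric])
  also have "\<dots> = projL u \<bullet> v"
    using inner_projL_projM[of v u] projL_span[OF assms] by (simp add: inner_commute)
  also have "\<dots> \<le> norm (projL u) * norm v"
    by (rule norm_cauchy_schwarz)
  finally show ?thesis .
qed

lemma inner_projM_le:
  assumes "projM v = v"
  shows "u \<bullet> v \<le> norm (projM u) * norm v"
proof -
  have "u \<bullet> v = projL u \<bullet> v + projM u \<bullet> v"
    by (simp only: projL_add_projM inner_add_left[symmetric])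
  also have "\<dots> = projM u \<bullet> v"
    using inner_projL_projM[of u v] assms by simp
  also have "\<dots> \<le> norm (projM u) * norm v"
    by (rule norm_cauchy_schwarz)
  finally show ?thesis .
qed

lemma projL_eq_0_imp: "norm u = 1 \<Longrightarrow> projL u = 0 \<Longrightarrow> projM u \<noteq> 0"
  using projL_add_projM[of u] by auto

definition cylinder :: "real \<Rightarrow> 'a set" where
  "cylinder r = {x. norm (projL x) \<le> r \<and> norm (projM x) \<le> 1}"

lemma cylinder_borel[measurable]: "cylinder r \<in> sets borel"
  unfolding cylinder_def by measurable

lemma closed_cylinder: "closed (cylinder r)"
  unfolding cylinder_def by (intro closed_Collect_conj closed_Collect_le continuous_intros)

lemma cylinder_subset_cball: "cylinder r \<subseteq> cball 0 (r + 1)"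
proof
  fix x assume "x \<in> cylinder r"
  then show "x \<in> cball 0 (r + 1)"
    using norm_le_norm_projL_add_norm_projM[of x] by (simp add: cylinder_def)
qed

lemma cylinder_mono: "r \<le> r' \<Longrightarrow> cylinder r \<subseteq> cylinder r'"
  by (auto simp: cylinder_def)

lemma convex_cylinder: "convex (cylinder r)"
proof (rule convexI)
  fix x y and u v :: real
  assume x: "x \<in> cylinder r" and y: "y \<in> cylinder r" and uv: "0 \<le> u" "0 \<le> v" "u + v = 1"
  have "norm (projL (u *\<^sub>R x + v *\<^sub>R y)) \<le> u * norm (projL x) + v * norm (projL y)"
    using norm_triangle_ineq[of "u *\<^sub>R projL x" "v *\<^sub>R projL y"] uv by (simp add: projL_add)
  also have "\<dots> \<le> u * r + v * r"
    using x y uv by (intro add_mono mult_left_mono) (auto simp: cylinder_def)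
  finally have L: "norm (projL (u *\<^sub>R x + v *\<^sub>R y)) \<le> r"
    using uv by (simp add: distrib_right[symmetric])
  have "norm (projM (u *\<^sub>R x + v *\<^sub>R y)) \<le> u * norm (projM x) + v * norm (projM y)"
    using norm_triangle_ineq[of "u *\<^sub>R projM x" "v *\<^sub>R projM y"] uv by (simp add: projM_add)
  also have "\<dots> \<le> u * 1 + v * 1"
    using x y uv by (intro add_mono mult_left_mono) (auto simp: cylinder_def)
  finally have M: "norm (projM (u *\<^sub>R x + v *\<^sub>R y)) \<le> 1"
    using uv by simp
  from L M show "u *\<^sub>R x + v *\<^sub>R y \<in> cylinder r"
    by (simp add: cylinder_def)
qed

lemma ball_subset_cylinder: "ball 0 (min r 1) \<subseteq> cylinder r"
proof
  fix x :: 'a assume "x \<in> ball 0 (min r 1)"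
  then show "x \<in> cylinder r"
    using norm_projL_le[of x] norm_projM_le[of x] by (simp add: cylinder_def)
qed

lemma convex_body_cylinder:
  assumes "0 < r"
  shows "convex_body (cylinder r)"
proof -
  have "compact (cylinder r)"
    using closed_cylinder bounded_subset[OF bounded_cball cylinder_subset_cball]
    by (simp add: compact_eq_bounded_closed)
  moreover have "0 \<in> ball (0::'a) (min r 1)"
    using assms by simp
  then have "0 \<in> interior (cylinder r)"
    using interior_maximal[OF ball_subset_cylinder open_ball] by blast
  ultimately show ?thesis
    using convex_cylinder by (auto simp: convex_body_def)
qed

lemma origin_symmetric_cylinder: "origin_symmetric (cylinder r)"
proof -
  have "- x \<in> cylinder r \<longleftrightarrow> x \<in> cylinder r" for x
    by (simp add: cylinder_def)
  then show ?thesis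
    unfolding origin_symmetric_def by (metis (no_types, lifting) equalityI image_subset_iff
        minus_minus subsetI image_eqI)
qed

text \<open>A ray from the origin in direction \<open>u\<close> leaves \<open>cylinder r\<close> through the flat face
  \<open>norm (projL x) = r\<close> iff \<open>u \<in> L_cone r\<close>, and through the curved face otherwise.\<close>

definition L_cone :: "real \<Rightarrow> 'a set" where
  "L_cone r = {x. r * norm (projM x) \<le> norm (projL x)}"

lemma L_cone_borel[measurable]: "L_cone r \<in> sets borel"
  unfolding L_cone_def by measurable

lemma scaleR_in_L_cone_iff: "0 < t \<Longrightarrow> t *\<^sub>R x \<in> L_cone r \<longleftrightarrow> x \<in> L_cone r"
  by (simp add: L_cone_def mult.left_commute[of r t])

lemma norm_projL_pos_if_L_cone:
  assumes "0 < r" and "norm u = 1" and "u \<in> L_cone r"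
  shows "0 < norm (projL u)"
  using assms projL_eq_0_imp[OF assms(2)] by (cases "projL u = 0") (auto simp: L_cone_def mult_le_0_iff)

lemma norm_projM_pos_if_not_L_cone: "u \<notin> L_cone r \<Longrightarrow> 0 < norm (projM u)"
  by (cases "projM u = 0") (auto simp: L_cone_def)

definition cylinder_radius :: "real \<Rightarrow> 'a \<Rightarrow> real" where
  "cylinder_radius r u = (if u \<in> L_cone r then r / norm (projL u) else 1 / norm (projM u))"

lemma borel_measurable_cylinder_radius[measurable]: "cylinder_radius r \<in> borel_measurable borel"
  unfolding cylinder_radius_def by measurable

lemma scaleR_in_cylinder_iff_L_cone:
  assumes r: "0 < r" and u: "norm u = 1" and cone: "u \<in> L_cone r" and t: "0 < t"
  shows "t *\<^sub>R u \<in> cylinder r \<longleftrightarrow> t \<le> r / norm (projL u)"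
proof
  have L: "0 < norm (projL u)"
    using norm_projL_pos_if_L_cone[OF r u cone] .
  show "t *\<^sub>R u \<in> cylinder r \<Longrightarrow> t \<le> r / norm (projL u)"
    using t L by (simp add: cylinder_def field_simps)
  assume "t \<le> r / norm (projL u)"
  then have tL: "t * norm (projL u) \<le> r"
    using L by (simp add: field_simps)
  have "r * (t * norm (projM u)) = t * (r * norm (projM u))"
    by (simp add: ac_simps)
  also have "\<dots> \<le> t * norm (projL u)"
    using cone t by (intro mult_left_mono) (auto simp: L_cone_def)
  also have "\<dots> \<le> r * 1"
    using tL by simp
  finally have "t * norm (projM u) \<le> 1"
    using r by (simp only: mult_le_cancel_left_pos)
  with tL show "t *\<^sub>R u \<in> cylinder r"
    using t by (simp add: cylinder_def)
qed

lemma scaleR_in_cylinder_iff_not_L_cone: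
  assumes r: "0 < r" and cone: "u \<notin> L_cone r" and t: "0 < t"
  shows "t *\<^sub>R u \<in> cylinder r \<longleftrightarrow> t \<le> 1 / norm (projM u)"
proof
  have M: "0 < norm (projM u)"
    using norm_projM_pos_if_not_L_cone[OF cone] .
  show "t *\<^sub>R u \<in> cylinder r \<Longrightarrow> t \<le> 1 / norm (projM u)"
    using t M by (simp add: cylinder_def field_simps)
  assume "t \<le> 1 / norm (projM u)"
  then have tM: "t * norm (projM u) \<le> 1"
    using M by (simp add: field_simps)
  have "t * norm (projL u) \<le> t * (r * norm (projM u))"
    using cone t by (intro mult_left_mono) (auto simp: L_cone_def)
  also have "\<dots> = r * (t * norm (projM u))"
    by (simp add: ac_simps)
  also have "\<dots> \<le> r"
    using tM r by (simp add: mult_left_le)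
  finally show "t *\<^sub>R u \<in> cylinder r"
    using tM t by (simp add: cylinder_def)
qed

lemma cylinder_ray:
  assumes r: "0 < r" and u: "norm u = 1"
  shows "{t. 0 < t \<and> t *\<^sub>R u \<in> cylinder r} = {0<..cylinder_radius r u}"
    and "0 < cylinder_radius r u"
proof -
  have "{t. 0 < t \<and> t *\<^sub>R u \<in> cylinder r} = {0<..cylinder_radius r u} \<and> 0 < cylinder_radius r u"
  proof (cases "u \<in> L_cone r")
    case True
    then show ?thesis
      using scaleR_in_cylinder_iff_L_cone[OF r u True] norm_projL_pos_if_L_cone[OF r u True] r
      by (auto simp: cylinder_radius_def)
  next
    case False
    then show ?thesis
      using scaleR_in_cylinder_iff_not_L_cone[OF r False] norm_projM_pos_if_not_L_cone[OF False]
      by (auto simp: cylinder_radius_def)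
  qed
  then show "{t. 0 < t \<and> t *\<^sub>R u \<in> cylinder r} = {0<..cylinder_radius r u}"
    and "0 < cylinder_radius r u"
    by auto
qed

lemma radial_fun_cylinder:
  assumes "0 < r" and "norm u = 1"
  shows "radial_fun (cylinder r) u = cylinder_radius r u"
  using cylinder_ray[OF assms] by (rule radial_fun_eqI)

lemma support_fun_cylinder_L:
  assumes r: "0 < r" and v: "v \<in> span B" "norm v = 1"
  shows "support_fun (cylinder r) v = r"
  unfolding support_fun_def
proof (rule cSup_eq_maximum)
  have "r *\<^sub>R v \<in> cylinder r"
    using r v projL_span[OF v(1)] projM_span[OF v(1)] by (simp add: cylinder_def)
  moreover have "v \<bullet> (r *\<^sub>R v) = r"
    using v by (simp add: dot_square_norm)
  ultimately show "r \<in> (\<lambda>y. v \<bullet> y) ` cylinder r"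
    by (metis image_eqI)
next
  fix z assume "z \<in> (\<lambda>y. v \<bullet> y) ` cylinder r"
  then obtain y where "y \<in> cylinder r" "z = y \<bullet> v"
    by (auto simp: inner_commute)
  then show "z \<le> r"
    using inner_projL_le[OF v(1), of y] v by (simp add: cylinder_def)
qed

lemma support_fun_cylinder_M:
  assumes r: "0 < r" and v: "projM v = v" "norm v = 1"
  shows "support_fun (cylinder r) v = 1"
  unfolding support_fun_def
proof (rule cSup_eq_maximum)
  have "projL v = 0"
    using projL_projM[of v] v(1) by simp
  then have "v \<in> cylinder r"
    using r v by (simp add: cylinder_def)
  moreover have "v \<bullet> v = 1"
    using v by (simp add: dot_square_norm)
  ultimately show "1 \<in> (\<lambda>y. v \<bullet> y) ` cylinder r"
    by (metis image_eqI)
next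
  fix z assume "z \<in> (\<lambda>y. v \<bullet> y) ` cylinder r"
  then obtain y where "y \<in> cylinder r" "z = y \<bullet> v"
    by (auto simp: inner_commute)
  then show "z \<le> 1"
    using inner_projM_le[OF v(1), of y] v by (simp add: cylinder_def)
qed

lemma radial_point_cylinder_L:
  assumes r: "0 < r" and u: "norm u = 1" and cone: "u \<in> L_cone r"
  shows "radial_fun (cylinder r) u *\<^sub>R u \<in> supp_hyperplane (cylinder r) (sgn (projL u))"
    and "sgn (projL u) \<in> sphere 0 1 \<inter> span B"
proof -
  have L: "0 < norm (projL u)"
    using norm_projL_pos_if_L_cone[OF r u cone] .
  then show v: "sgn (projL u) \<in> sphere 0 1 \<inter> span B"
    by (simp add: norm_sgn sgn_div_norm span_mul projL_in_span)
  have "(radial_fun (cylinder r) u *\<^sub>R u) \<bullet> sgn (projL u) = r / norm (projL u) * (u \<bullet> projL u) / norm (projL u)"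
    using radial_fun_cylinder[OF r u] cone L
    by (simp add: cylinder_radius_def sgn_div_norm field_simps)
  also have "\<dots> = r"
    using L by (simp add: inner_projL_self power2_eq_square)
  finally show "radial_fun (cylinder r) u *\<^sub>R u \<in> supp_hyperplane (cylinder r) (sgn (projL u))"
    using support_fun_cylinder_L[OF r] v by (simp add: supp_hyperplane_def)
qed

lemma radial_point_cylinder_M:
  assumes r: "0 < r" and u: "norm u = 1" and cone: "u \<notin> L_cone r"
  shows "radial_fun (cylinder r) u *\<^sub>R u \<in> supp_hyperplane (cylinder r) (sgn (projM u))"
    and "sgn (projM u) \<in> sphere 0 1"
proof -
  have M: "0 < norm (projM u)"
    using norm_projM_pos_if_not_L_cone[OF cone] .
  then show v: "sgn (projM u) \<in> sphere 0 1"
    by (simp add: norm_sgn)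
  have "(radial_fun (cylinder r) u *\<^sub>R u) \<bullet> sgn (projM u) = (u \<bullet> projM u) / (norm (projM u))\<^sup>2"
    using radial_fun_cylinder[OF r u] cone M
    by (simp add: cylinder_radius_def sgn_div_norm field_simps power2_eq_square)
  also have "\<dots> = 1"
    using M by (simp add: inner_projM_self)
  finally show "radial_fun (cylinder r) u *\<^sub>R u \<in> supp_hyperplane (cylinder r) (sgn (projM u))"
    using support_fun_cylinder_M[OF r] M by (simp add: supp_hyperplane_def sgn_div_norm norm_sgn)
qed

lemma rev_radial_gauss_cylinder_sphere:
  assumes "0 < r"
  shows "rev_radial_gauss (cylinder r) (sphere 0 1) = sphere 0 1"
proof -
  have "u \<in> rev_radial_gauss (cylinder r) (sphere 0 1)" if "u \<in> sphere 0 1" for u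
    using that radial_point_cylinder_L[OF assms, of u] radial_point_cylinder_M[OF assms, of u]
    by (cases "u \<in> L_cone r") (auto simp: rev_radial_gauss_def)
  then show ?thesis
    by (auto simp: rev_radial_gauss_def)
qed

lemma rev_radial_gauss_cylinder_L:
  assumes r: "0 < r"
  shows "rev_radial_gauss (cylinder r) (sphere 0 1 \<inter> span B) = sphere 0 1 \<inter> L_cone r"
proof (intro set_eqI iffI)
  fix u assume "u \<in> sphere 0 1 \<inter> L_cone r"
  then show "u \<in> rev_radial_gauss (cylinder r) (sphere 0 1 \<inter> span B)"
    using radial_point_cylinder_L[OF r, of u] by (auto simp: rev_radial_gauss_def)
next
  fix u assume "u \<in> rev_radial_gauss (cylinder r) (sphere 0 1 \<inter> span B)"
  then obtain v where u: "norm u = 1" and v: "v \<in> span B" "norm v = 1"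
    and hyp: "(radial_fun (cylinder r) u *\<^sub>R u) \<bullet> v = support_fun (cylinder r) v"
    by (auto simp: rev_radial_gauss_def supp_hyperplane_def)
  show "u \<in> sphere 0 1 \<inter> L_cone r"
  proof (rule ccontr)
    assume "u \<notin> sphere 0 1 \<inter> L_cone r"
    then have cone: "u \<notin> L_cone r"
      using u by simp
    then have M: "0 < norm (projM u)"
      by (rule norm_projM_pos_if_not_L_cone)
    have "(radial_fun (cylinder r) u *\<^sub>R u) \<bullet> v = (u \<bullet> v) / norm (projM u)"
      using radial_fun_cylinder[OF r u] cone by (simp add: cylinder_radius_def)
    also have "\<dots> \<le> norm (projL u) / norm (projM u)"
      using inner_projL_le[OF v(1), of u] v M by (simp add: divide_right_mono)
    also have "\<dots> < r"
      using cone M by (simp add: L_cone_def field_simps)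
    finally show False
      using hyp support_fun_cylinder_L[OF r v] by simp
  qed
qed

lemma dual_curv_measure_cylinder:
  assumes r: "0 < r" and C[measurable]: "C \<in> sets borel"
    and cone: "\<And>t x. 0 < t \<Longrightarrow> t *\<^sub>R x \<in> C \<longleftrightarrow> x \<in> C"
    and eta: "rev_radial_gauss (cylinder r) \<eta> = sphere 0 1 \<inter> C"
    and q: "0 < q"
  shows "dual_curv_measure q (cylinder r) \<eta> = q / real DIM('a) *
      enn2real (\<integral>\<^sup>+x. indicator (cylinder r \<inter> C) x * ennreal (norm x powr (q - DIM('a))) \<partial>lborel)"
    and "(\<integral>\<^sup>+x. indicator (cylinder r \<inter> C) x * ennreal (norm x powr (q - DIM('a))) \<partial>lborel) < \<infinity>"
proof -
  have "cylinder_radius r \<in> borel_measurable sphere_measure"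
    by (rule measurable_compose[OF measurable_sphere_measure_id]) measurable
  then have "radial_fun (cylinder r) \<in> borel_measurable sphere_measure"
    by (subst measurable_cong[where g="cylinder_radius r"])
       (simp_all add: space_sphere_measure radial_fun_cylinder[OF r])
  moreover have "{t. 0 < t \<and> t *\<^sub>R u \<in> cylinder r} = {0<..radial_fun (cylinder r) u}"
    and "0 < radial_fun (cylinder r) u" if "u \<in> sphere 0 1" for u
    using that by (simp_all add: cylinder_ray[OF r] radial_fun_cylinder[OF r])
  ultimately show "dual_curv_measure q (cylinder r) \<eta> = q / real DIM('a) *
      enn2real (\<integral>\<^sup>+x. indicator (cylinder r \<inter> C) x * ennreal (norm x powr (q - DIM('a))) \<partial>lborel)"
    and "(\<integral>\<^sup>+x. indicator (cylinder r \<inter> C) x * ennreal (norm x powr (q - DIM('a))) \<partial>lborel) < \<infinity>"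
    using dual_curv_measure_star_cone[OF cylinder_borel cylinder_subset_cball C _ _ cone _ eta q]
    by blast+
qed

subsection \<open>Reduction to an integral over the unit square\<close>

definition dimL :: nat where
  "dimL = card B"

definition codimL :: nat where
  "codimL = DIM('a) - card B"

lemma dimL_pos: "0 < dimL"
  using B_nonempty finite_B by (simp add: dimL_def card_gt_0_iff)

lemma codimL_pos: "0 < codimL"
  using B_subset B_proper by (simp add: codimL_def psubset_card_mono psubsetI)

lemma DIM_eq_dimL_add_codimL: "real DIM('a) = real dimL + real codimL"
  using card_mono[OF finite_Basis B_subset] by (simp add: dimL_def codimL_def)

lemma emeasure_norm_proj_atMost:
  assumes a: "0 < a" and b: "0 < b"
  shows "emeasure lborel {x. norm (projL x) \<le> a \<and> norm (projM x) \<le> b} =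
    ennreal (a ^ dimL * b ^ codimL) * emeasure lborel (cylinder 1)"
proof -
  define c where "c j = (if j \<in> B then a else b)" for j :: 'a
  define T where "T x = (\<Sum>j\<in>Basis. (c j * (x \<bullet> j)) *\<^sub>R j)" for x :: 'a
  have T_inner: "T x \<bullet> j = c j * (x \<bullet> j)" if "j \<in> Basis" for x j
    using that by (simp add: T_def inner_sum_left inner_Basis if_distrib cong: if_cong)
  have "projL (T x) = a *\<^sub>R projL x" and "projM (T x) = b *\<^sub>R projM x" for x
    by (simp_all add: euclidean_eq_iff[where 'a='a] inner_projL_Basis inner_projM_Basis T_inner c_def)
  then have "{x. T x \<in> {x. norm (projL x) \<le> a \<and> norm (projM x) \<le> b}} = cylinder 1"
    using a b by (auto simp: cylinder_def)
  moreover have "(\<Prod>j\<in>Basis. c j) = a ^ dimL * b ^ codimL"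
  proof -
    have "(\<Prod>j\<in>Basis. c j) = (\<Prod>j\<in>Basis - B. c j) * (\<Prod>j\<in>B. c j)"
      using B_subset by (simp add: prod.subset_diff)
    also have "\<dots> = b ^ codimL * a ^ dimL"
      using B_subset finite_B by (simp add: c_def dimL_def codimL_def card_Diff_subset)
    finally show ?thesis
      by simp
  qed
  ultimately show ?thesis
    using emeasure_lborel_diagonal_preimage[of c "{x. norm (projL x) \<le> a \<and> norm (projM x) \<le> b}"] a b
    by (simp add: c_def T_def)
qed

lemma norm_proj_atMost_null:
  assumes "a \<le> 0 \<or> b \<le> 0"
  shows "{x. norm (projL x) \<le> a \<and> norm (projM x) \<le> b} \<in> null_sets lborel"
proof -
  obtain j1 where j1: "j1 \<in> B"
    using B_nonempty by blast
  obtain j2 where j2: "j2 \<in> Basis" "j2 \<notin> B"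
    using B_proper B_subset by blast
  have sub: "{x. norm (projL x) \<le> a \<and> norm (projM x) \<le> b} \<subseteq> {x. x \<bullet> j1 = 0} \<union> {x. x \<bullet> j2 = 0}"
  proof
    fix x assume x: "x \<in> {x. norm (projL x) \<le> a \<and> norm (projM x) \<le> b}"
    show "x \<in> {x. x \<bullet> j1 = 0} \<union> {x. x \<bullet> j2 = 0}"
    proof (cases "a \<le> 0")
      case True
      have "norm (projL x) \<le> a"
        using x by simp
      then have "norm (projL x) \<le> 0"
        using True by linarith
      then have "projL x = 0"
        by simp
      then show ?thesis
        using inner_projL_Basis[of j1 x] j1 B_subset by auto
    next
      case False
      have "norm (projM x) \<le> b"
        using x by simp
      then have "norm (projM x) \<le> 0"
        using False assms by linarith
      then have "projM x = 0"
        by simp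
      then show ?thesis
        using inner_projM_Basis[of j2 x] j2 by auto
    qed
  qed
  have null: "{x::'a. x \<bullet> j1 = 0} \<union> {x. x \<bullet> j2 = 0} \<in> null_sets lborel"
    using coordinate_hyperplane_null j1 j2 B_subset by auto
  show ?thesis
    by (rule null_sets_subset[OF null _ sub]) measurable
qed

definition cylinder_const :: real where
  "cylinder_const = real dimL * real codimL * measure lborel (cylinder 1)"

lemma emeasure_cylinder_finite: "emeasure lborel (cylinder 1) < \<infinity>"
proof -
  have "emeasure lborel (cylinder 1) \<le> emeasure lborel (cball (0::'a) 2)"
    using cylinder_subset_cball[of 1] by (intro emeasure_mono) auto
  then show ?thesis
    using emeasure_lborel_cball_finite[of "0::'a" 2] by (simp add: le_less_trans)
qed

lemma cylinder_const_pos: "0 < cylinder_const"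
proof -
  have "emeasure lborel (ball (0::'a) 1) \<le> emeasure lborel (cylinder 1)"
    using ball_subset_cylinder[of 1] by (intro emeasure_mono) auto
  moreover have "0 < emeasure lborel (ball (0::'a) 1)"
    using content_ball_gt_0_iff[of "0::'a" 1] emeasure_lborel_ball_finite[of "0::'a" 1]
    by (simp add: emeasure_eq_ennreal_measure)
  ultimately have "0 < emeasure lborel (cylinder 1)"
    by (rule less_le_trans[rotated])
  then have "0 < measure lborel (cylinder 1)"
    using emeasure_cylinder_finite by (simp add: emeasure_eq_ennreal_measure)
  then show ?thesis
    using dimL_pos codimL_pos by (simp add: cylinder_const_def)
qed

text \<open>\<open>law_L \<Otimes>\<^sub>M law_M\<close> is the distribution of \<open>(norm (projL x), norm (projM x))\<close> under
  Lebesgue measure on \<open>cylinder 1\<close>; the total mass is put into the second factor.\<close>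

definition law_L :: "real measure" where
  "law_L = powr_density 1 (real dimL - 1)"

definition law_M :: "real measure" where
  "law_M = powr_density cylinder_const (real codimL - 1)"

lemma emeasure_cylinder_norm_proj_atMost:
  "emeasure lborel (cylinder 1 \<inter> {x. norm (projL x) \<le> a \<and> norm (projM x) \<le> b}) =
    emeasure law_L {..a} * emeasure law_M {..b}"
proof -
  have L: "emeasure law_L {..a} = (if a < 0 then 0 else ennreal (min a 1 ^ dimL / dimL))"
    unfolding law_L_def using dimL_pos
    by (subst emeasure_powr_density_atMost) (auto simp: powr_realpow')
  have M: "emeasure law_M {..b} =
      (if b < 0 then 0 else ennreal (cylinder_const * (min b 1 ^ codimL / codimL)))"
    unfolding law_M_def using codimL_pos cylinder_const_pos
    by (subst emeasure_powr_density_atMost) (auto simp: powr_realpow')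
  show ?thesis
  proof (cases "a \<le> 0 \<or> b \<le> 0")
    case True
    then have "emeasure law_L {..a} * emeasure law_M {..b} = 0"
      using L M dimL_pos codimL_pos by (auto simp: zero_power)
    moreover have "cylinder 1 \<inter> {x. norm (projL x) \<le> a \<and> norm (projM x) \<le> b} \<in> null_sets lborel"
      using norm_proj_atMost_null[OF True] by (rule null_set_Int1) simp
    ultimately show ?thesis
      by (metis null_setsD1)
  next
    case False
    then have a: "0 < min a 1" and b: "0 < min b 1"
      by auto
    have "cylinder 1 \<inter> {x. norm (projL x) \<le> a \<and> norm (projM x) \<le> b} =
        {x. norm (projL x) \<le> min a 1 \<and> norm (projM x) \<le> min b 1}"
      by (auto simp: cylinder_def)
    moreover have "ennreal (min a 1 ^ dimL * min b 1 ^ codimL) * emeasure lborel (cylinder 1) =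
        ennreal (min a 1 ^ dimL / dimL) * ennreal (cylinder_const * (min b 1 ^ codimL / codimL))"
      using a b dimL_pos codimL_pos emeasure_cylinder_finite
      by (simp add: emeasure_eq_ennreal_measure cylinder_const_def field_simps flip: ennreal_mult)
    ultimately show ?thesis
      using emeasure_norm_proj_atMost[OF a b] False L M by simp
  qed
qed

lemma sets_law_L[simp, measurable_cong]: "sets law_L = sets borel"
  and sets_law_M[simp, measurable_cong]: "sets law_M = sets borel"
  by (simp_all add: law_L_def law_M_def)

lemma emeasure_cylinder_norm_projM_atMost:
  assumes A: "A \<in> sets borel"
  shows "emeasure lborel (cylinder 1 \<inter> {x. norm (projL x) \<in> A \<and> norm (projM x) \<le> b}) =
    emeasure law_L A * emeasure law_M {..b}"
proof -
  let ?E = "cylinder 1 \<inter> {x. norm (projM x) \<le> b}"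
  have E: "?E \<in> sets borel"
    by measurable
  define N1 where "N1 = distr (density lborel (indicator ?E)) borel (\<lambda>x. norm (projL x))"
  define N2 where "N2 = density law_L (\<lambda>_. emeasure law_M {..b})"
  have N1: "emeasure N1 X = emeasure lborel (?E \<inter> (\<lambda>x. norm (projL x)) -` X)" if "X \<in> sets borel" for X
    unfolding N1_def using that E by (intro emeasure_distr_density_indicator) auto
  have N2: "emeasure N2 X = emeasure law_M {..b} * emeasure law_L X" if "X \<in> sets borel" for X
    unfolding N2_def using that by (intro emeasure_density_const) simp
  have "N1 = N2"
  proof (rule measure_eqI_atMost)
    show "sets N1 = sets borel" "sets N2 = sets borel"
      by (auto simp: N1_def N2_def)
    fix a
    have "?E \<inter> (\<lambda>x. norm (projL x)) -` {..a} = cylinder 1 \<inter> {x. norm (projL x) \<le> a \<and> norm (projM x) \<le> b}"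
      by auto
    then show "emeasure N1 {..a} = emeasure N2 {..a}"
      using N1[of "{..a}"] N2[of "{..a}"] emeasure_cylinder_norm_proj_atMost[of a b]
      by (simp add: mult.commute)
    have "emeasure N1 {..a} \<le> emeasure lborel (cylinder 1)"
      using N1[of "{..a}"] by (simp, intro emeasure_mono) auto
    then show "emeasure N1 {..a} < \<infinity>"
      using emeasure_cylinder_finite by (simp add: le_less_trans)
  qed
  moreover have "?E \<inter> (\<lambda>x. norm (projL x)) -` A = cylinder 1 \<inter> {x. norm (projL x) \<in> A \<and> norm (projM x) \<le> b}"
    by auto
  ultimately show ?thesis
    using N1[OF A] N2[OF A] by (simp add: mult.commute)
qed

lemma emeasure_cylinder_norm_proj:
  assumes A: "A \<in> sets borel" and A': "A' \<in> sets borel"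
  shows "emeasure lborel (cylinder 1 \<inter> {x. norm (projL x) \<in> A \<and> norm (projM x) \<in> A'}) =
    emeasure law_L A * emeasure law_M A'"
proof -
  let ?E = "cylinder 1 \<inter> (\<lambda>x. norm (projL x)) -` A"
  have E: "?E \<in> sets borel"
    using A by measurable
  define N1 where "N1 = distr (density lborel (indicator ?E)) borel (\<lambda>x. norm (projM x))"
  define N2 where "N2 = density law_M (\<lambda>_. emeasure law_L A)"
  have N1: "emeasure N1 X = emeasure lborel (?E \<inter> (\<lambda>x. norm (projM x)) -` X)" if "X \<in> sets borel" for X
    unfolding N1_def using that E by (intro emeasure_distr_density_indicator) auto
  have N2: "emeasure N2 X = emeasure law_L A * emeasure law_M X" if "X \<in> sets borel" for X
    unfolding N2_def using that by (intro emeasure_density_const) simp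
  have "N1 = N2"
  proof (rule measure_eqI_atMost)
    show "sets N1 = sets borel" "sets N2 = sets borel"
      by (auto simp: N1_def N2_def)
    fix b
    have "?E \<inter> (\<lambda>x. norm (projM x)) -` {..b} = cylinder 1 \<inter> {x. norm (projL x) \<in> A \<and> norm (projM x) \<le> b}"
      by auto
    then show "emeasure N1 {..b} = emeasure N2 {..b}"
      using N1[of "{..b}"] N2[of "{..b}"] emeasure_cylinder_norm_projM_atMost[OF A, of b] by simp
    have "emeasure N1 {..b} \<le> emeasure lborel (cylinder 1)"
      using N1[of "{..b}"] by (simp, intro emeasure_mono) auto
    then show "emeasure N1 {..b} < \<infinity>"
      using emeasure_cylinder_finite by (simp add: le_less_trans)
  qed
  moreover have "?E \<inter> (\<lambda>x. norm (projM x)) -` A' = cylinder 1 \<inter> {x. norm (projL x) \<in> A \<and> norm (projM x) \<in> A'}"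
    by auto
  ultimately show ?thesis
    using N1[OF A'] N2[OF A'] by simp
qed

lemma distr_cylinder_norm_proj:
  "distr (density lborel (indicator (cylinder 1))) (borel \<Otimes>\<^sub>M borel) (\<lambda>x. (norm (projL x), norm (projM x))) =
    law_L \<Otimes>\<^sub>M law_M"
proof (rule pair_measure_eqI[symmetric])
  show "sigma_finite_measure law_L" "sigma_finite_measure law_M"
    by (simp_all add: law_L_def law_M_def sigma_finite_powr_density)
  fix A A' assume A: "A \<in> sets law_L" and A': "A' \<in> sets law_M"
  have "emeasure (distr (density lborel (indicator (cylinder 1))) (borel \<Otimes>\<^sub>M borel)
        (\<lambda>x. (norm (projL x), norm (projM x)))) (A \<times> A') =
      emeasure lborel (cylinder 1 \<inter> (\<lambda>x. (norm (projL x), norm (projM x))) -` (A \<times> A'))"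
    using A A' by (intro emeasure_distr_density_indicator) auto
  also have "cylinder 1 \<inter> (\<lambda>x. (norm (projL x), norm (projM x))) -` (A \<times> A') =
      cylinder 1 \<inter> {x. norm (projL x) \<in> A \<and> norm (projM x) \<in> A'}"
    by auto
  finally show "emeasure law_L A * emeasure law_M A' =
      emeasure (distr (density lborel (indicator (cylinder 1))) (borel \<Otimes>\<^sub>M borel)
        (\<lambda>x. (norm (projL x), norm (projM x)))) (A \<times> A')"
    using A A' emeasure_cylinder_norm_proj by simp
qed simp

lemma nn_integral_cylinder_norm_proj:
  assumes h[measurable]: "h \<in> borel_measurable (borel \<Otimes>\<^sub>M borel)"
  shows "(\<integral>\<^sup>+x. indicator (cylinder 1) x * h (norm (projL x), norm (projM x)) \<partial>lborel) =
    (\<integral>\<^sup>+t. ennreal (t powr (real dimL - 1)) * indicator {0..1} t *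
      (\<integral>\<^sup>+s. ennreal (cylinder_const * s powr (real codimL - 1)) * indicator {0..1} s * h (t, s) \<partial>lborel) \<partial>lborel)"
proof -
  interpret M: sigma_finite_measure law_M
    by (simp add: law_M_def sigma_finite_powr_density)
  have "(\<integral>\<^sup>+x. indicator (cylinder 1) x * h (norm (projL x), norm (projM x)) \<partial>lborel) =
      (\<integral>\<^sup>+x. h (norm (projL x), norm (projM x)) \<partial>density lborel (indicator (cylinder 1)))"
    by (subst nn_integral_density) auto
  also have "\<dots> = (\<integral>\<^sup>+p. h p \<partial>distr (density lborel (indicator (cylinder 1))) (borel \<Otimes>\<^sub>M borel)
      (\<lambda>x. (norm (projL x), norm (projM x))))"
    by (subst nn_integral_distr) (auto cong: measurable_cong_sets)
  also have "\<dots> = (\<integral>\<^sup>+t. (\<integral>\<^sup>+s. h (t, s) \<partial>law_M) \<partial>law_L)"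
    unfolding distr_cylinder_norm_proj
    by (rule M.nn_integral_fst[symmetric]) (simp cong: measurable_cong_sets)
  also have "\<dots> = (\<integral>\<^sup>+t. ennreal (t powr (real dimL - 1)) * indicator {0..1} t *
      (\<integral>\<^sup>+s. ennreal (cylinder_const * s powr (real codimL - 1)) * indicator {0..1} s * h (t, s) \<partial>lborel) \<partial>lborel)"
    unfolding law_L_def law_M_def powr_density_def
    by (subst nn_integral_density; simp)+
  finally show ?thesis .
qed

text \<open>The profile of the integrand of \<open>dual_curv_measure q (cylinder r)\<close> in the coordinates
  \<open>\<tau> = norm (projL x) / r\<close>, \<open>s = norm (projM x)\<close>, over a region \<open>W\<close> of the unit square.\<close>

definition phi :: "real \<Rightarrow> (real \<times> real) set \<Rightarrow> real \<Rightarrow> real \<Rightarrow> real \<Rightarrow> real" where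
  "phi q W r \<tau> s = (if (\<tau>, s) \<in> W \<and> 0 \<le> \<tau> \<and> \<tau> \<le> 1 \<and> 0 \<le> s \<and> s \<le> 1
     then \<tau> powr (real dimL - 1) * s powr (real codimL - 1) * (r\<^sup>2 * \<tau>\<^sup>2 + s\<^sup>2) powr ((q - DIM('a)) / 2)
     else 0)"

definition Phi :: "real \<Rightarrow> (real \<times> real) set \<Rightarrow> real \<Rightarrow> ennreal" where
  "Phi q W r = (\<integral>\<^sup>+\<tau>. (\<integral>\<^sup>+s. ennreal (phi q W r \<tau> s) \<partial>lborel) \<partial>lborel)"

lemma phi_nonneg: "0 \<le> phi q W r \<tau> s"
  by (simp add: phi_def)

lemma borel_measurable_phi[measurable]:
  assumes [measurable]: "W \<in> sets (borel \<Otimes>\<^sub>M borel)"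
  shows "(\<lambda>(\<tau>, s). phi q W r \<tau> s) \<in> borel_measurable (borel \<Otimes>\<^sub>M borel)"
proof -
  have [measurable]: "Measurable.pred (borel \<Otimes>\<^sub>M borel) (\<lambda>p. p \<in> W)"
    by (simp add: pred_def)
  show ?thesis
    unfolding phi_def by measurable
qed

lemma norm_powr_eq_norm_proj: "norm x powr e = ((norm (projL x))\<^sup>2 + (norm (projM x))\<^sup>2) powr (e / 2)"
proof -
  have "norm x powr e = (norm x powr 2) powr (e / 2)"
    unfolding powr_powr by simp
  also have "norm x powr 2 = (norm (projL x))\<^sup>2 + (norm (projM x))\<^sup>2"
    by (simp add: powr_numeral norm_projL_projM[symmetric])
  finally show ?thesis .
qed

lemma scaled_phi:
  fixes q :: real
  assumes r: "0 < r"
  shows "r powr (real dimL - 1) * phi q W r (t / r) s =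
    (if 0 \<le> t \<and> t \<le> r \<and> 0 \<le> s \<and> s \<le> 1 \<and> (t / r, s) \<in> W
     then t powr (real dimL - 1) * s powr (real codimL - 1) * (t\<^sup>2 + s\<^sup>2) powr ((q - DIM('a)) / 2)
     else 0)"
proof -
  have "0 \<le> t / r \<longleftrightarrow> 0 \<le> t" and "t / r \<le> 1 \<longleftrightarrow> t \<le> r"
    using r by (simp_all add: field_simps)
  moreover have "r\<^sup>2 * (t / r)\<^sup>2 = t\<^sup>2"
    using r by (simp add: power_divide)
  moreover have "r powr (real dimL - 1) * (t / r) powr (real dimL - 1) = t powr (real dimL - 1)"
    if "0 \<le> t" using r that by (simp add: powr_divide)
  ultimately show ?thesis
    by (auto simp: phi_def mult.assoc)
qed

lemma nn_integral_cylinder_eq_scaled_phi: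
  fixes q :: real
  assumes r: "0 < r" "r \<le> 1" and W[measurable]: "W \<in> sets (borel \<Otimes>\<^sub>M borel)"
  shows "(\<integral>\<^sup>+x. indicator (cylinder r \<inter> {x. (norm (projL x) / r, norm (projM x)) \<in> W}) x *
      ennreal (norm x powr (q - DIM('a))) \<partial>lborel) =
    (\<integral>\<^sup>+t. (\<integral>\<^sup>+s. ennreal (cylinder_const * (r powr (real dimL - 1) * phi q W r (t / r) s)) \<partial>lborel) \<partial>lborel)"
proof -
  define h where "h p = ennreal (if fst p \<le> r \<and> snd p \<le> 1 \<and> (fst p / r, snd p) \<in> W
      then ((fst p)\<^sup>2 + (snd p)\<^sup>2) powr ((q - DIM('a)) / 2) else 0)" for p :: "real \<times> real"
  have [measurable]: "Measurable.pred (borel \<Otimes>\<^sub>M borel) (\<lambda>p. (fst p / r, snd p) \<in> W)"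
    by measurable
  have [measurable]: "h \<in> borel_measurable (borel \<Otimes>\<^sub>M borel)"
    unfolding h_def by measurable
  have "indicator (cylinder r \<inter> {x. (norm (projL x) / r, norm (projM x)) \<in> W}) x *
      ennreal (norm x powr (q - DIM('a))) = indicator (cylinder 1) x * h (norm (projL x), norm (projM x))" for x
    using cylinder_mono[OF r(2)]
    by (auto simp: h_def cylinder_def indicator_def norm_powr_eq_norm_proj[of x])
  then have "(\<integral>\<^sup>+x. indicator (cylinder r \<inter> {x. (norm (projL x) / r, norm (projM x)) \<in> W}) x *
      ennreal (norm x powr (q - DIM('a))) \<partial>lborel) =
    (\<integral>\<^sup>+t. ennreal (t powr (real dimL - 1)) * indicator {0..1} t *
      (\<integral>\<^sup>+s. ennreal (cylinder_const * s powr (real codimL - 1)) * indicator {0..1} s * h (t, s) \<partial>lborel) \<partial>lborel)"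
    by (simp add: nn_integral_cylinder_norm_proj)
  also have "\<dots> = (\<integral>\<^sup>+t. (\<integral>\<^sup>+s. ennreal (cylinder_const * (r powr (real dimL - 1) * phi q W r (t / r) s)) \<partial>lborel) \<partial>lborel)"
  proof (rule nn_integral_cong)
    fix t :: real
    have "ennreal (t powr (real dimL - 1)) * indicator {0..1} t *
        (\<integral>\<^sup>+s. ennreal (cylinder_const * s powr (real codimL - 1)) * indicator {0..1} s * h (t, s) \<partial>lborel) =
      (\<integral>\<^sup>+s. ennreal (t powr (real dimL - 1)) * indicator {0..1} t *
        (ennreal (cylinder_const * s powr (real codimL - 1)) * indicator {0..1} s * h (t, s)) \<partial>lborel)"
      by (rule nn_integral_cmult[symmetric]) measurable
    also have "\<dots> = (\<integral>\<^sup>+s. ennreal (cylinder_const * (r powr (real dimL - 1) * phi q W r (t / r) s)) \<partial>lborel)"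
      using cylinder_const_pos r
      by (intro nn_integral_cong)
         (auto simp: scaled_phi h_def indicator_def ennreal_mult'[symmetric] mult.assoc mult.left_commute)
    finally show "ennreal (t powr (real dimL - 1)) * indicator {0..1} t *
        (\<integral>\<^sup>+s. ennreal (cylinder_const * s powr (real codimL - 1)) * indicator {0..1} s * h (t, s) \<partial>lborel) =
      (\<integral>\<^sup>+s. ennreal (cylinder_const * (r powr (real dimL - 1) * phi q W r (t / r) s)) \<partial>lborel)" .
  qed
  finally show ?thesis .
qed

lemma nn_integral_cylinder_eq_Phi:
  fixes q :: real
  assumes r: "0 < r" "r \<le> 1" and W[measurable]: "W \<in> sets (borel \<Otimes>\<^sub>M borel)"
  shows "(\<integral>\<^sup>+x. indicator (cylinder r \<inter> {x. (norm (projL x) / r, norm (projM x)) \<in> W}) x *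
      ennreal (norm x powr (q - DIM('a))) \<partial>lborel) = ennreal (cylinder_const * r powr real dimL) * Phi q W r"
proof -
  let ?c = "cylinder_const * r powr (real dimL - 1)"
  have c: "0 \<le> ?c"
    using cylinder_const_pos by simp
  have [measurable]: "(\<lambda>(t, s). phi q W r (t / r) s) \<in> borel_measurable (borel \<Otimes>\<^sub>M borel)"
    using measurable_compose[OF _ borel_measurable_phi[OF W], of "\<lambda>(t, s). (t / r, s)"]
    by (simp add: case_prod_beta')
  have inner: "(\<integral>\<^sup>+s. ennreal (cylinder_const * (r powr (real dimL - 1) * phi q W r \<tau> s)) \<partial>lborel) =
      ennreal ?c * (\<integral>\<^sup>+s. ennreal (phi q W r \<tau> s) \<partial>lborel)" for \<tau>
  proof -
    have "(\<integral>\<^sup>+s. ennreal (cylinder_const * (r powr (real dimL - 1) * phi q W r \<tau> s)) \<partial>lborel) =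
        (\<integral>\<^sup>+s. ennreal ?c * ennreal (phi q W r \<tau> s) \<partial>lborel)"
      using c by (intro nn_integral_cong) (simp add: mult.assoc phi_nonneg flip: ennreal_mult)
    also have "\<dots> = ennreal ?c * (\<integral>\<^sup>+s. ennreal (phi q W r \<tau> s) \<partial>lborel)"
      by (rule nn_integral_cmult) measurable
    finally show ?thesis .
  qed
  have "(\<integral>\<^sup>+t. (\<integral>\<^sup>+s. ennreal (cylinder_const * (r powr (real dimL - 1) * phi q W r (t / r) s)) \<partial>lborel) \<partial>lborel) =
      ennreal r * (\<integral>\<^sup>+\<tau>. (\<integral>\<^sup>+s. ennreal (cylinder_const * (r powr (real dimL - 1) * phi q W r ((0 + r * \<tau>) / r) s)) \<partial>lborel) \<partial>lborel)"
    using r by (subst nn_integral_real_affine[where c=r and t=0])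
      (auto intro: borel_measurable_nn_integral_lborel)
  also have "\<dots> = ennreal r * (ennreal ?c * Phi q W r)"
    using r unfolding Phi_def inner
    by (simp add: nn_integral_cmult borel_measurable_nn_integral_lborel)
  also have "\<dots> = ennreal (cylinder_const * r powr real dimL) * Phi q W r"
  proof -
    have "r * ?c = cylinder_const * r powr real dimL"
      using r by (simp add: powr_diff field_simps)
    then have "ennreal r * ennreal ?c = ennreal (cylinder_const * r powr real dimL)"
      using r by (metis ennreal_mult' less_imp_le)
    then show ?thesis
      by (metis mult.assoc)
  qed
  finally show ?thesis
    using nn_integral_cylinder_eq_scaled_phi[OF r W] by simp
qed

lemma dual_curv_measure_cylinder_ratio:
  fixes q :: real
  assumes r: "0 < r" "r \<le> 1" and q: "0 < q"
  shows "dual_curv_measure q (cylinder r) (sphere 0 1 \<inter> span B) / dual_curv_measure q (cylinder r) (sphere 0 1) =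
      enn2real (Phi q {(\<tau>, s). s \<le> \<tau>} r) / enn2real (Phi q UNIV r)"
    and "Phi q {(\<tau>, s). s \<le> \<tau>} r < \<infinity>" and "Phi q UNIV r < \<infinity>"
proof -
  let ?k = "cylinder_const * r powr real dimL"
  have k: "0 < ?k"
    using cylinder_const_pos r by simp
  have eq: "dual_curv_measure q (cylinder r) \<eta> = q / real DIM('a) * ?k * enn2real (Phi q W r)"
    and fin: "Phi q W r < \<infinity>"
    if W[measurable]: "W \<in> sets (borel \<Otimes>\<^sub>M borel)"
      and C[measurable]: "C \<in> sets borel" and cone: "\<And>t x. 0 < t \<Longrightarrow> t *\<^sub>R x \<in> C \<longleftrightarrow> x \<in> C"
      and eta: "rev_radial_gauss (cylinder r) \<eta> = sphere 0 1 \<inter> C"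
      and CW: "cylinder r \<inter> C = cylinder r \<inter> {x. (norm (projL x) / r, norm (projM x)) \<in> W}"
    for W \<eta> C
  proof -
    note dc = dual_curv_measure_cylinder[OF r(1) C cone eta q]
    note I = nn_integral_cylinder_eq_Phi[OF r W, of q]
    show "dual_curv_measure q (cylinder r) \<eta> = q / real DIM('a) * ?k * enn2real (Phi q W r)"
      using dc(1) k unfolding CW I by (simp add: enn2real_mult)
    show "Phi q W r < \<infinity>"
      using dc(2) r cylinder_const_pos unfolding CW I by (auto simp: ennreal_mult_less_top)
  qed
  have L: "cylinder r \<inter> L_cone r = cylinder r \<inter> {x. (norm (projL x) / r, norm (projM x)) \<in> {(\<tau>, s). s \<le> \<tau>}}"
    using r by (auto simp: L_cone_def field_simps)
  note eq_L = eq[OF borel_set_snd_le_fst L_cone_borel scaleR_in_L_cone_iff rev_radial_gauss_cylinder_L[OF r(1)] L]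
  note fin_L = fin[OF borel_set_snd_le_fst L_cone_borel scaleR_in_L_cone_iff rev_radial_gauss_cylinder_L[OF r(1)] L]
  have S: "rev_radial_gauss (cylinder r) (sphere 0 1) = sphere 0 1 \<inter> UNIV"
    using rev_radial_gauss_cylinder_sphere[OF r(1)] by simp
  note eq_S = eq[of UNIV UNIV, OF UNIV_in_sets_pair_borel _ _ S]
  note fin_S = fin[of UNIV UNIV, OF UNIV_in_sets_pair_borel _ _ S]
  show "Phi q {(\<tau>, s). s \<le> \<tau>} r < \<infinity>" and "Phi q UNIV r < \<infinity>"
    using fin_L fin_S by simp_all
  show "dual_curv_measure q (cylinder r) (sphere 0 1 \<inter> span B) / dual_curv_measure q (cylinder r) (sphere 0 1) =
      enn2real (Phi q {(\<tau>, s). s \<le> \<tau>} r) / enn2real (Phi q UNIV r)"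
    using eq_L eq_S r q cylinder_const_pos by simp
qed

subsection \<open>The limit \<open>r \<rightarrow> 0\<close>\<close>

definition phi0 :: "real \<Rightarrow> (real \<times> real) set \<Rightarrow> real \<Rightarrow> real \<Rightarrow> real" where
  "phi0 q W \<tau> s = (if (\<tau>, s) \<in> W \<and> 0 \<le> \<tau> \<and> \<tau> \<le> 1 \<and> 0 \<le> s \<and> s \<le> 1
     then \<tau> powr (real dimL - 1) * s powr (q - real dimL - 1) else 0)"

definition Phi0 :: "real \<Rightarrow> (real \<times> real) set \<Rightarrow> ennreal" where
  "Phi0 q W = (\<integral>\<^sup>+\<tau>. (\<integral>\<^sup>+s. ennreal (phi0 q W \<tau> s) \<partial>lborel) \<partial>lborel)"

lemma borel_measurable_phi0[measurable]:
  assumes [measurable]: "W \<in> sets (borel \<Otimes>\<^sub>M borel)"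
  shows "(\<lambda>(\<tau>, s). phi0 q W \<tau> s) \<in> borel_measurable (borel \<Otimes>\<^sub>M borel)"
proof -
  have [measurable]: "Measurable.pred (borel \<Otimes>\<^sub>M borel) (\<lambda>p. p \<in> W)"
    by (simp add: pred_def)
  show ?thesis
    unfolding phi0_def by measurable
qed

lemma phi_antimono:
  fixes q :: real
  assumes q: "q < real DIM('a)" and r: "0 < r'" "r' \<le> r"
  shows "phi q W r \<tau> s \<le> phi q W r' \<tau> s"
proof (cases "(\<tau>, s) \<in> W \<and> 0 \<le> \<tau> \<and> \<tau> \<le> 1 \<and> 0 < s \<and> s \<le> 1")
  case True
  have "r'\<^sup>2 \<le> r\<^sup>2"
    using r by (intro power_mono) auto
  then have "(r\<^sup>2 * \<tau>\<^sup>2 + s\<^sup>2) powr ((q - DIM('a)) / 2) \<le> (r'\<^sup>2 * \<tau>\<^sup>2 + s\<^sup>2) powr ((q - DIM('a)) / 2)"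
    using q True by (intro powr_mono2' add_right_mono mult_right_mono) (auto intro: add_nonneg_pos)
  then show ?thesis
    using True by (auto simp: phi_def intro!: mult_left_mono)
qed (auto simp: phi_def)

lemma phi_tendsto:
  fixes q :: real
  assumes r: "r \<longlonglongrightarrow> 0"
  shows "(\<lambda>l. phi q W (r l) \<tau> s) \<longlonglongrightarrow> phi0 q W \<tau> s"
proof (cases "(\<tau>, s) \<in> W \<and> 0 \<le> \<tau> \<and> \<tau> \<le> 1 \<and> 0 < s \<and> s \<le> 1")
  case True
  have "(\<lambda>l. (r l)\<^sup>2 * \<tau>\<^sup>2 + s\<^sup>2) \<longlonglongrightarrow> 0\<^sup>2 * \<tau>\<^sup>2 + s\<^sup>2"
    by (intro tendsto_intros r)
  then have "(\<lambda>l. ((r l)\<^sup>2 * \<tau>\<^sup>2 + s\<^sup>2) powr ((q - DIM('a)) / 2)) \<longlonglongrightarrow> (s\<^sup>2) powr ((q - DIM('a)) / 2)"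
    using True by (intro tendsto_powr) auto
  moreover have eq: "s powr (real codimL - 1) * (s\<^sup>2) powr ((q - DIM('a)) / 2) = s powr (q - real dimL - 1)"
  proof -
    have "s\<^sup>2 = s powr 2"
      using True by (simp add: powr_numeral)
    then have "(s\<^sup>2) powr ((q - DIM('a)) / 2) = s powr (2 * ((q - DIM('a)) / 2))"
      by (simp only: powr_powr)
    also have "2 * ((q - DIM('a)) / 2) = q - DIM('a)"
      by simp
    finally have "(s\<^sup>2) powr ((q - DIM('a)) / 2) = s powr (q - DIM('a))" .
    then show ?thesis
      using True DIM_eq_dimL_add_codimL by (simp flip: powr_add)
  qed
  ultimately have "(\<lambda>l. s powr (real codimL - 1) * ((r l)\<^sup>2 * \<tau>\<^sup>2 + s\<^sup>2) powr ((q - DIM('a)) / 2)) \<longlonglongrightarrow>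
      s powr (q - real dimL - 1)"
    by (metis tendsto_mult_left)
  then show ?thesis
    using True tendsto_mult_left[of _ _ _ "\<tau> powr (real dimL - 1)"]
    by (simp add: phi_def phi0_def mult.assoc)
qed (auto simp: phi_def phi0_def)

lemma Phi_tendsto:
  fixes q :: real
  assumes r: "decseq r" "\<And>l. 0 < r l" "r \<longlonglongrightarrow> 0" and q: "q < real DIM('a)"
    and W[measurable]: "W \<in> sets (borel \<Otimes>\<^sub>M borel)"
  shows "(\<lambda>l. Phi q W (r l)) \<longlonglongrightarrow> Phi0 q W"
proof -
  have mono: "incseq (\<lambda>l. ennreal (phi q W (r l) \<tau> s))" for \<tau> s
    using r(1,2) by (intro monoI ennreal_leI phi_antimono[OF q]) (auto simp: decseq_def)
  have inner: "(\<lambda>l. \<integral>\<^sup>+s. ennreal (phi q W (r l) \<tau> s) \<partial>lborel) \<longlonglongrightarrow> (\<integral>\<^sup>+s. ennreal (phi0 q W \<tau> s) \<partial>lborel)" for \<tau>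
    using mono by (intro nn_integral_LIMSEQ tendsto_ennrealI phi_tendsto[OF r(3)]) (auto simp: incseq_def le_fun_def)
  have "incseq (\<lambda>l \<tau>. \<integral>\<^sup>+s. ennreal (phi q W (r l) \<tau> s) \<partial>lborel)"
    using mono by (auto simp: incseq_def le_fun_def intro!: nn_integral_mono)
  moreover have "(\<lambda>\<tau>. \<integral>\<^sup>+s. ennreal (phi q W (r l) \<tau> s) \<partial>lborel) \<in> borel_measurable lborel" for l
    using borel_measurable_nn_integral_lborel[OF borel_measurable_phi[OF W]] by simp
  ultimately show ?thesis
    unfolding Phi_def Phi0_def using inner
    by (rule nn_integral_LIMSEQ)
qed

lemma Phi0_UNIV:
  fixes q :: real
  assumes q: "real dimL < q"
  shows "Phi0 q UNIV = ennreal (1 / (real dimL * (q - real dimL)))"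
proof -
  have inner: "(\<integral>\<^sup>+s. ennreal (phi0 q UNIV \<tau> s) \<partial>lborel) =
      ennreal (\<tau> powr (real dimL - 1)) * indicator {0..1} \<tau> * ennreal (1 / (q - real dimL))" for \<tau>
  proof -
    have "(\<integral>\<^sup>+s. ennreal (phi0 q UNIV \<tau> s) \<partial>lborel) =
        (\<integral>\<^sup>+s. (ennreal (\<tau> powr (real dimL - 1)) * indicator {0..1} \<tau>) *
          (ennreal (s powr (q - real dimL - 1)) * indicator {0..1} s) \<partial>lborel)"
      by (rule nn_integral_cong) (auto simp: phi0_def indicator_def ennreal_mult)
    also have "\<dots> = (ennreal (\<tau> powr (real dimL - 1)) * indicator {0..1} \<tau>) *
        (\<integral>\<^sup>+s. ennreal (s powr (q - real dimL - 1)) * indicator {0..1} s \<partial>lborel)"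
      by (rule nn_integral_cmult) measurable
    also have "(\<integral>\<^sup>+s. ennreal (s powr (q - real dimL - 1)) * indicator {0..1} s \<partial>lborel) =
        ennreal (1 / (q - real dimL))"
      using q by (subst nn_integral_powr_atLeastAtMost) auto
    finally show ?thesis .
  qed
  have "Phi0 q UNIV = (\<integral>\<^sup>+\<tau>. ennreal (1 / (q - real dimL)) *
      (ennreal (\<tau> powr (real dimL - 1)) * indicator {0..1} \<tau>) \<partial>lborel)"
    unfolding Phi0_def inner by (simp add: mult.commute)
  also have "\<dots> = ennreal (1 / (q - real dimL)) *
      (\<integral>\<^sup>+\<tau>. ennreal (\<tau> powr (real dimL - 1)) * indicator {0..1} \<tau> \<partial>lborel)"
    by (rule nn_integral_cmult) measurable
  also have "\<dots> = ennreal (1 / (q - real dimL)) * ennreal (1 / real dimL)"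
    using dimL_pos by (simp add: nn_integral_powr_atLeastAtMost)
  also have "\<dots> = ennreal (1 / (real dimL * (q - real dimL)))"
    using q dimL_pos by (simp add: mult.commute flip: ennreal_mult)
  finally show ?thesis .
qed

lemma Phi0_L_cone:
  fixes q :: real
  assumes q: "real dimL < q"
  shows "Phi0 q {(\<tau>, s). s \<le> \<tau>} = ennreal (1 / (q * (q - real dimL)))"
proof -
  have inner: "(\<integral>\<^sup>+s. ennreal (phi0 q {(\<tau>, s). s \<le> \<tau>} \<tau> s) \<partial>lborel) =
      ennreal (1 / (q - real dimL)) * (ennreal (\<tau> powr (q - 1)) * indicator {0..1} \<tau>)" for \<tau>
  proof (cases "0 \<le> \<tau> \<and> \<tau> \<le> 1")
    case True
    have "(\<integral>\<^sup>+s. ennreal (phi0 q {(\<tau>, s). s \<le> \<tau>} \<tau> s) \<partial>lborel) =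
        (\<integral>\<^sup>+s. ennreal (\<tau> powr (real dimL - 1)) * (ennreal (s powr (q - real dimL - 1)) * indicator {0..\<tau>} s) \<partial>lborel)"
      using True by (intro nn_integral_cong) (auto simp: phi0_def indicator_def ennreal_mult)
    also have "\<dots> = ennreal (\<tau> powr (real dimL - 1)) *
        (\<integral>\<^sup>+s. ennreal (s powr (q - real dimL - 1)) * indicator {0..\<tau>} s \<partial>lborel)"
      by (rule nn_integral_cmult) measurable
    also have "\<dots> = ennreal (\<tau> powr (real dimL - 1)) * ennreal (\<tau> powr (q - real dimL) / (q - real dimL))"
      using q True by (simp add: nn_integral_powr_atLeastAtMost)
    also have "\<dots> = ennreal (1 / (q - real dimL)) * ennreal (\<tau> powr (q - 1))"
    proof -
      have "\<tau> powr (real dimL - 1) * \<tau> powr (q - real dimL) = \<tau> powr (q - 1)"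
        by (cases "\<tau> = 0") (simp_all flip: powr_add)
      then show ?thesis
        using q by (simp add: mult.commute flip: ennreal_mult)
    qed
    finally show ?thesis
      using True by simp
  qed (auto simp: phi0_def indicator_def)
  have "Phi0 q {(\<tau>, s). s \<le> \<tau>} = ennreal (1 / (q - real dimL)) *
      (\<integral>\<^sup>+\<tau>. ennreal (\<tau> powr (q - 1)) * indicator {0..1} \<tau> \<partial>lborel)"
    unfolding Phi0_def inner by (rule nn_integral_cmult) measurable
  also have "\<dots> = ennreal (1 / (q - real dimL)) * ennreal (1 / q)"
    using q dimL_pos by (simp add: nn_integral_powr_atLeastAtMost)
  also have "\<dots> = ennreal (1 / (q * (q - real dimL)))"
    using q dimL_pos by (simp add: mult.commute flip: ennreal_mult)
  finally show ?thesis .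
qed

lemma Phi0_L_cone_eq_infinity:
  fixes q :: real
  assumes q: "q \<le> real dimL"
  shows "Phi0 q {(\<tau>, s). s \<le> \<tau>} = \<infinity>"
proof -
  have inner: "\<infinity> * indicator {1/2..1} \<tau> \<le> (\<integral>\<^sup>+s. ennreal (phi0 q {(\<tau>, s). s \<le> \<tau>} \<tau> s) \<partial>lborel)" for \<tau>
  proof (cases "1/2 \<le> \<tau> \<and> \<tau> \<le> 1")
    case True
    have "(\<integral>\<^sup>+s. ennreal (phi0 q {(\<tau>, s). s \<le> \<tau>} \<tau> s) \<partial>lborel) =
        (\<integral>\<^sup>+s. ennreal (\<tau> powr (real dimL - 1)) * (ennreal (s powr (q - real dimL - 1)) * indicator {0..\<tau>} s) \<partial>lborel)"
      using True by (intro nn_integral_cong) (auto simp: phi0_def indicator_def ennreal_mult)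
    also have "\<dots> = ennreal (\<tau> powr (real dimL - 1)) *
        (\<integral>\<^sup>+s. ennreal (s powr (q - real dimL - 1)) * indicator {0..\<tau>} s \<partial>lborel)"
      by (rule nn_integral_cmult) measurable
    also have "\<dots> = \<infinity>"
      using q True by (simp add: nn_integral_powr_atLeastAtMost_eq_infinity ennreal_mult_top)
    finally show ?thesis
      by simp
  next
    case False
    then have "indicator {1/2..1} \<tau> = (0::ennreal)"
      by (auto simp: indicator_def)
    then show ?thesis
      by simp
  qed
  have "(\<integral>\<^sup>+\<tau>. \<infinity> * indicator {1/2..1::real} \<tau> \<partial>lborel) \<le> Phi0 q {(\<tau>, s). s \<le> \<tau>}"
    unfolding Phi0_def by (intro nn_integral_mono inner)
  moreover have "(\<integral>\<^sup>+\<tau>. \<infinity> * indicator {1/2..1::real} \<tau> \<partial>lborel) = \<infinity>"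
    by (subst nn_integral_cmult_indicator) (auto simp: ennreal_top_mult)
  ultimately show ?thesis
    by (simp add: top_unique)
qed

lemma Phi_UNIV_split:
  assumes W[measurable]: "W \<in> sets (borel \<Otimes>\<^sub>M borel)"
  shows "Phi q UNIV r = Phi q W r + Phi q (- W) r"
proof -
  have [measurable]: "- W \<in> sets (borel \<Otimes>\<^sub>M borel)"
    using sets.compl_sets[OF W] by (simp add: space_pair_measure Compl_eq_Diff_UNIV)
  have "ennreal (phi q UNIV r \<tau> s) = ennreal (phi q W r \<tau> s) + ennreal (phi q (- W) r \<tau> s)" for \<tau> s
    by (auto simp: phi_def)
  then have "(\<integral>\<^sup>+s. ennreal (phi q UNIV r \<tau> s) \<partial>lborel) =
      (\<integral>\<^sup>+s. ennreal (phi q W r \<tau> s) \<partial>lborel) + (\<integral>\<^sup>+s. ennreal (phi q (- W) r \<tau> s) \<partial>lborel)" for \<tau>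
    by (simp add: nn_integral_add)
  then show ?thesis
    unfolding Phi_def
    by (simp add: nn_integral_add borel_measurable_nn_integral_lborel)
qed

lemma Phi_outside_L_cone_le:
  fixes q :: real
  assumes q: "0 < q" "q \<le> real dimL" "q < real DIM('a)"
  shows "Phi q (- {(\<tau>, s). s \<le> \<tau>}) r \<le> ennreal ((2 / q)\<^sup>2)"
proof -
  let ?f = "\<lambda>t. ennreal (t powr (q / 2 - 1)) * indicator {0..1} t"
  have bound: "ennreal (phi q (- {(\<tau>, s). s \<le> \<tau>}) r \<tau> s) \<le> ?f \<tau> * ?f s" for \<tau> s
  proof (cases "0 < \<tau> \<and> \<tau> < s \<and> s \<le> 1")
    case True
    have "(r\<^sup>2 * \<tau>\<^sup>2 + s\<^sup>2) powr ((q - DIM('a)) / 2) \<le> (s\<^sup>2) powr ((q - DIM('a)) / 2)"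
      using q True by (intro powr_mono2') auto
    also have "s\<^sup>2 = s powr 2"
      using True by (simp add: powr_numeral)
    also have "(s powr 2) powr ((q - DIM('a)) / 2) = s powr (2 * ((q - DIM('a)) / 2))"
      by (rule powr_powr)
    also have "2 * ((q - DIM('a)) / 2) = q - DIM('a)"
      by simp
    finally have "phi q (- {(\<tau>, s). s \<le> \<tau>}) r \<tau> s \<le>
        \<tau> powr (real dimL - 1) * (s powr (real codimL - 1) * s powr (q - DIM('a)))"
      using True by (auto simp: phi_def mult.assoc intro!: mult_left_mono)
    also have "\<dots> = \<tau> powr (real dimL - 1) * (s powr (q / 2 - 1) * s powr (q / 2 - real dimL))"
    proof -
      have "(real codimL - 1) + (q - DIM('a)) = (q / 2 - 1) + (q / 2 - real dimL)"
        using DIM_eq_dimL_add_codimL by simp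
      then show ?thesis
        by (simp only: powr_add[symmetric])
    qed
    also have "\<dots> \<le> \<tau> powr (real dimL - 1) * (s powr (q / 2 - 1) * \<tau> powr (q / 2 - real dimL))"
      using True q by (intro mult_left_mono powr_mono2') auto
    also have "\<dots> = \<tau> powr (q / 2 - 1) * s powr (q / 2 - 1)"
      using True by (simp add: mult_ac flip: powr_add)
    finally show ?thesis
      using True by (simp add: ennreal_leI flip: ennreal_mult)
  qed (auto simp: phi_def)
  have f: "(\<integral>\<^sup>+t. ?f t \<partial>lborel) = ennreal (2 / q)"
    using q by (simp add: nn_integral_powr_atLeastAtMost)
  have "Phi q (- {(\<tau>, s). s \<le> \<tau>}) r \<le> (\<integral>\<^sup>+\<tau>. (\<integral>\<^sup>+s. ?f \<tau> * ?f s \<partial>lborel) \<partial>lborel)"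
    unfolding Phi_def by (intro nn_integral_mono bound)
  also have "\<dots> = (\<integral>\<^sup>+\<tau>. ?f \<tau> * ennreal (2 / q) \<partial>lborel)"
    by (intro nn_integral_cong) (simp add: nn_integral_cmult f)
  also have "\<dots> = ennreal ((2 / q)\<^sup>2)"
    using q by (simp add: nn_integral_multc f power2_eq_square flip: ennreal_mult)
  finally show ?thesis .
qed

lemma Phi_ratio_tendsto_if_dimL_less:
  fixes q :: real
  assumes r: "decseq r" "\<And>l. 0 < r l" "r \<longlonglongrightarrow> 0" and q: "real dimL < q" "q < real DIM('a)"
  shows "(\<lambda>l. enn2real (Phi q {(\<tau>, s). s \<le> \<tau>} (r l)) / enn2real (Phi q UNIV (r l))) \<longlonglongrightarrow> real dimL / q"
proof -
  have "(\<lambda>l. enn2real (Phi q {(\<tau>, s). s \<le> \<tau>} (r l))) \<longlonglongrightarrow> 1 / (q * (q - real dimL))"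
    using Phi_tendsto[OF r q(2) borel_set_snd_le_fst] Phi0_L_cone[OF q(1)] q dimL_pos
    by (intro tendsto_enn2real) auto
  moreover have "(\<lambda>l. enn2real (Phi q UNIV (r l))) \<longlonglongrightarrow> 1 / (real dimL * (q - real dimL))"
    using Phi_tendsto[OF r q(2) UNIV_in_sets_pair_borel] Phi0_UNIV[OF q(1)] q dimL_pos
    by (intro tendsto_enn2real) auto
  ultimately have "(\<lambda>l. enn2real (Phi q {(\<tau>, s). s \<le> \<tau>} (r l)) / enn2real (Phi q UNIV (r l))) \<longlonglongrightarrow>
      (1 / (q * (q - real dimL))) / (1 / (real dimL * (q - real dimL)))"
    using q dimL_pos by (intro tendsto_divide) auto
  also have "(1 / (q * (q - real dimL))) / (1 / (real dimL * (q - real dimL))) = real dimL / q"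
    using q dimL_pos by (simp add: field_simps)
  finally show ?thesis .
qed

text \<open>For \<open>q \<le> dimL\<close> the integral over the cone around \<open>L\<close> blows up as \<open>r \<rightarrow> 0\<close>, while the
  integral over its complement stays bounded.\<close>

lemma Phi_ratio_tendsto_if_le_dimL:
  fixes q :: real
  assumes r: "decseq r" "\<And>l. 0 < r l" "r \<longlonglongrightarrow> 0" and q: "0 < q" "q \<le> real dimL" "q < real DIM('a)"
    and fin: "\<And>l. Phi q {(\<tau>, s). s \<le> \<tau>} (r l) < \<infinity>"
  shows "(\<lambda>l. enn2real (Phi q {(\<tau>, s). s \<le> \<tau>} (r l)) / enn2real (Phi q UNIV (r l))) \<longlonglongrightarrow> 1"
proof -
  let ?L = "{(\<tau>::real, s::real). s \<le> \<tau>}"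
  define T where "T l = enn2real (Phi q ?L (r l))" for l
  define R where "R l = enn2real (Phi q (- ?L) (r l))" for l
  have Phi_L: "Phi q ?L (r l) = ennreal (T l)" for l
    using fin by (simp add: T_def less_top[symmetric] ennreal_enn2real)
  have R_le: "Phi q (- ?L) (r l) \<le> ennreal ((2 / q)\<^sup>2)" for l
    using Phi_outside_L_cone_le q by simp
  have Phi_R: "Phi q (- ?L) (r l) = ennreal (R l)" for l
    using le_less_trans[OF R_le[of l], of \<infinity>] by (simp add: R_def less_top[symmetric] ennreal_enn2real)
  have "filterlim T at_top sequentially"
    using Phi_tendsto[OF r q(3) borel_set_snd_le_fst] Phi0_L_cone_eq_infinity[OF q(2)] Phi_L
    by (simp add: ennreal_tendsto_top_eq_at_top)
  moreover have "R l \<le> (2 / q)\<^sup>2" for l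
    using R_le[of l] Phi_R[of l] q by simp
  ultimately have "(\<lambda>l. T l / (T l + R l)) \<longlonglongrightarrow> 1"
    by (intro tendsto_divide_add_bounded) (auto simp: R_def)
  moreover have "enn2real (Phi q UNIV (r l)) = T l + R l" for l
  proof -
    have "0 \<le> T l" "0 \<le> R l"
      by (simp_all add: T_def R_def)
    then show ?thesis
      using Phi_UNIV_split[OF borel_set_snd_le_fst, of q "r l"] Phi_L[of l] Phi_R[of l]
      by (simp flip: ennreal_plus)
  qed
  ultimately show ?thesis
    by (simp add: T_def)
qed

lemma dual_curv_measure_cylinder_ratio_tendsto:
  fixes q :: real
  assumes r: "decseq r" "\<And>l. 0 < r l" "\<And>l. r l \<le> 1" "r \<longlonglongrightarrow> 0"
    and q: "0 < q" "q < real DIM('a)"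
  shows "(\<lambda>l. dual_curv_measure q (cylinder (r l)) (sphere 0 1 \<inter> span B) /
      dual_curv_measure q (cylinder (r l)) (sphere 0 1)) \<longlonglongrightarrow> (if real dimL \<le> q then real dimL / q else 1)"
proof (cases "real dimL < q")
  case True
  then show ?thesis
    using Phi_ratio_tendsto_if_dimL_less[OF r(1,2,4) True q(2)]
      dual_curv_measure_cylinder_ratio(1)[OF r(2,3) q(1)] by simp
next
  case False
  then show ?thesis
    using Phi_ratio_tendsto_if_le_dimL[OF r(1,2,4) q(1) _ q(2)]
      dual_curv_measure_cylinder_ratio[OF r(2,3) q(1)] q(1) by simp
qed

end

theorem mainTheorem2:
  fixes q :: real and k :: nat
  assumes "DIM('a::euclidean_space) \<ge> 2"
    and "0 < q" and "q < real DIM('a)"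
    and "1 \<le> k" and "k \<le> DIM('a) - 1"
  shows "\<exists>(K :: nat \<Rightarrow> 'a set) (L :: 'a set).
           (\<forall>l. convex_body (K l) \<and> origin_symmetric (K l)) \<and>
           subspace L \<and> dim L = k \<and>
           ((\<lambda>l. dual_curv_measure q (K l) (sphere 0 1 \<inter> L) / dual_curv_measure q (K l) (sphere 0 1))
              \<longlonglongrightarrow> (if real k \<le> q then real k / q else 1))"
proof -
  have "k \<le> card (Basis :: 'a set)"
    using assms(5) by simp
  then obtain B :: "'a set" where B: "B \<subseteq> Basis" "card B = k"
    by (rule obtain_subset_with_card_n)
  moreover have "B \<noteq> {}"
    using B assms(4) by auto
  moreover have "B \<noteq> Basis"
    using B assms(1,5) by auto
  ultimately interpret coordinate_split B
    by unfold_locales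
  define r where "r l = 1 / real (Suc l)" for l
  have r: "decseq r" "\<And>l. 0 < r l" "\<And>l. r l \<le> 1" "r \<longlonglongrightarrow> 0"
    unfolding r_def using LIMSEQ_inverse_real_of_nat
    by (auto simp: decseq_def divide_simps inverse_eq_divide)
  have "dim (span B) = k"
    using B independent_mono[OF independent_Basis B(1)] by (simp add: dim_eq_card_independent)
  moreover have dimL_k: "dimL = k"
    using B by (simp add: dimL_def)
  moreover have "\<forall>l. convex_body (cylinder (r l)) \<and> origin_symmetric (cylinder (r l))"
    using convex_body_cylinder[OF r(2)] origin_symmetric_cylinder by simp
  ultimately show ?thesis
    using dual_curv_measure_cylinder_ratio_tendsto[OF r assms(2,3), unfolded dimL_k] subspace_span[of B]
    by (intro exI[of _ "\<lambda>l. cylinder (r l)"] exI[of _ "span B"]) simp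
qed

end
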